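(* Assume the standing assumptions in the context with case (CI) (so $\alpha=0$ and $\widetilde w=w$). Assume moreover that every $k_{n,j}$ is continuously differentiable and that for every $t'\in(0,T)$ there exists $\tilde c(t')>0$ with $|k_{n,j}'(t)|\le\tilde c(t')\,w_nw_j/w_{n+j}$ for all $n,j\in\mathbb N$ and $t\in[0,t']$. Let $\mathring u\in\mathcal D(G^{(w)})$ with $\mathring u\ge0$, and let $u$ be the unique (maximal) mild solution of $u'(t)=G^{(w)}u(t)+K(t,u(t))$, $u(0)=\mathring u$. Then $u$ is also a classical solution of this problem.
   Context: Let $0<T\le\infty$, $a_n\ge0$, $b_{n,j}\ge0$ with $b_{n,j}=0$ for $j\le n$, $k_{n,j}:[0,T)\to[0,\infty)$ continuous with $k_{n,j}=k_{j,n}$. For a positive sequence $v$, $\ell^1_v=\{f:\|f\|_v=\sum v_n|f_n|<\infty\}$ with componentwise order. Weight $w$: $w_n\ge n$, monotone increasing, and $\sum_{n=1}^{j-1}w_nb_{n,j}\le\kappa w_j$ for $j\ge2$ for some $\kappa\in(0,1]$. Case (CI): for every $t'\in(0,T)$ there is $c(t')>0$ with $k_{n,j}(t)\le c(t')w_nw_j/w_{n+j}$ for $t\in[0,t']$. $G^{(w)}$ is the closure in $\ell^1_w$ of $A^{(w)}+B^{(w)}$ where $A^{(w)}f=(-a_nf_n)_n$ and $B^{(w)}f=(\sum_{j>n}a_jb_{n,j}f_j)_n$ on maximal domains; it generates a substochastic $C_0$-semigroup $(S^{(w)}(t))_{t\ge 0}$ on $\ell^1_w$. $K(t,f)=(\tfrac12\sum_{j=1}^{n-1}k_{n-j,j}(t)f_{n-j}f_j-\sum_{j\ge1}k_{n,j}(t)f_nf_j)_n$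 for $f\in\ell^1_w$. A mild solution on $[0,t_1)$ is $u\in C([0,t_1),\ell^1_w)$ with $u(t)=S^{(w)}(t)\mathring u+\int_0^tS^{(w)}(t-s)K(s,u(s))\,ds$; the maximal mild solution exists and is unique on some $[0,t_{\max})$. A classical solution on $[0,t_1)$ is $u:[0,t_1)\to\ell^1_w$ continuous, continuously differentiable on $(0,t_1)$, with $u(t)\in\mathcal D(G^{(w)})$ and $u'(t)=G^{(w)}u(t)+K(t,u(t))$ for $t\in(0,t_1)$, and $u(0)=\mathring u$. *)

theory Defs
  imports "HOL-Analysis.Analysis"
begin

text \<open>Sequences are modelled as functions nat => real; index 0 is unused
  (elements of the weighted space are required to vanish at 0).\<close>

definition lw :: "(nat \<Rightarrow> real) \<Rightarrow> (nat \<Rightarrow> real) set" where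
  "lw w = {f. f 0 = 0 \<and> summable (\<lambda>n. w n * \<bar>f n\<bar>)}"

definition wnorm :: "(nat \<Rightarrow> real) \<Rightarrow> (nat \<Rightarrow> real) \<Rightarrow> real" where
  "wnorm w f = (\<Sum>n. w n * \<bar>f n\<bar>)"

definition lw_tendsto :: "(nat \<Rightarrow> real) \<Rightarrow> ('a \<Rightarrow> nat \<Rightarrow> real) \<Rightarrow> (nat \<Rightarrow> real) \<Rightarrow> 'a filter \<Rightarrow> bool" where
  "lw_tendsto w F g L \<longleftrightarrow> ((\<lambda>x. wnorm w (\<lambda>n. F x n - g n)) \<longlongrightarrow> 0) L"

definition opA :: "(nat \<Rightarrow> real) \<Rightarrow> (nat \<Rightarrow> real) \<Rightarrow> nat \<Rightarrow> real" where
  "opA a f = (\<lambda>n. if n = 0 then 0 else - a n * f n)"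

definition opB :: "(nat \<Rightarrow> real) \<Rightarrow> (nat \<Rightarrow> nat \<Rightarrow> real) \<Rightarrow> (nat \<Rightarrow> real) \<Rightarrow> nat \<Rightarrow> real" where
  "opB a b f = (\<lambda>n. if n = 0 then 0 else (\<Sum>j. if n < j then a j * b n j * f j else 0))"

definition domA :: "(nat \<Rightarrow> real) \<Rightarrow> (nat \<Rightarrow> real) \<Rightarrow> (nat \<Rightarrow> real) set" where
  "domA w a = {f \<in> lw w. opA a f \<in> lw w}"

definition domB :: "(nat \<Rightarrow> real) \<Rightarrow> (nat \<Rightarrow> real) \<Rightarrow> (nat \<Rightarrow> nat \<Rightarrow> real) \<Rightarrow> (nat \<Rightarrow> real) set" where
  "domB w a b = {f \<in> lw w. (\<forall>n\<ge>1. summable (\<lambda>j. if n < j then a j * b n j * f j else 0))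
                            \<and> opB a b f \<in> lw w}"

text \<open>Graph of G = closure of A + B (defined on D(A) \<inter> D(B)) in the weighted space.\<close>
definition graphG :: "(nat \<Rightarrow> real) \<Rightarrow> (nat \<Rightarrow> real) \<Rightarrow> (nat \<Rightarrow> nat \<Rightarrow> real)
    \<Rightarrow> ((nat \<Rightarrow> real) \<times> (nat \<Rightarrow> real)) set" where
  "graphG w a b = {(f, g). f \<in> lw w \<and> g \<in> lw w \<and>
      (\<exists>F :: nat \<Rightarrow> nat \<Rightarrow> real. (\<forall>m. F m \<in> domA w a \<inter> domB w a b) \<and>
         lw_tendsto w F f sequentially \<and>
         lw_tendsto w (\<lambda>m n. opA a (F m) n + opB a b (F m) n) g sequentially)}"

definition domG :: "(nat \<Rightarrow> real) \<Rightarrow> (nat \<Rightarrow> real) \<Rightarrow> (nat \<Rightarrow> nat \<Rightarrow> real) \<Rightarrow> (nat \<Rightarrow> real) set" where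
  "domG w a b = {f. \<exists>g. (f, g) \<in> graphG w a b}"

definition C0_semigroup_gen :: "(nat \<Rightarrow> real) \<Rightarrow> (real \<Rightarrow> (nat \<Rightarrow> real) \<Rightarrow> nat \<Rightarrow> real)
    \<Rightarrow> ((nat \<Rightarrow> real) \<times> (nat \<Rightarrow> real)) set \<Rightarrow> bool" where
  "C0_semigroup_gen w S P \<longleftrightarrow>
     (\<forall>t\<ge>0. \<forall>f\<in>lw w. S t f \<in> lw w) \<and>
     (\<forall>t\<ge>0. \<forall>f\<in>lw w. \<forall>g\<in>lw w. \<forall>c d. S t (\<lambda>n. c * f n + d * g n) = (\<lambda>n. c * S t f n + d * S t g n)) \<and>
     (\<forall>t\<ge>0. \<exists>M. \<forall>f\<in>lw w. wnorm w (S t f) \<le> M * wnorm w f) \<and>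
     (\<forall>f\<in>lw w. S 0 f = f) \<and>
     (\<forall>t\<ge>0. \<forall>s\<ge>0. \<forall>f\<in>lw w. S (t + s) f = S t (S s f)) \<and>
     (\<forall>f\<in>lw w. \<forall>t\<ge>0. lw_tendsto w (\<lambda>s. S s f) (S t f) (at t within {0..})) \<and>
     (\<forall>f\<in>lw w. \<forall>g\<in>lw w. (f, g) \<in> P \<longleftrightarrow>
          lw_tendsto w (\<lambda>h n. (S h f n - f n) / h) g (at_right 0))"

definition opK :: "(nat \<Rightarrow> nat \<Rightarrow> real \<Rightarrow> real) \<Rightarrow> real \<Rightarrow> (nat \<Rightarrow> real) \<Rightarrow> nat \<Rightarrow> real" where
  "opK k t f = (\<lambda>n. if n = 0 then 0 else
      (1/2) * (\<Sum>j\<in>{1..<n}. k (n - j) j t * f (n - j) * f j)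
      - (\<Sum>j. k n (Suc j) t * f n * f (Suc j)))"

text \<open>Mild solution on [0,t1): the ell^1_w-valued integral is taken componentwise
  (the integrand is continuous, so this agrees with the Bochner integral).\<close>
definition mild_solution :: "(nat \<Rightarrow> real) \<Rightarrow> (real \<Rightarrow> (nat \<Rightarrow> real) \<Rightarrow> nat \<Rightarrow> real)
    \<Rightarrow> (nat \<Rightarrow> nat \<Rightarrow> real \<Rightarrow> real) \<Rightarrow> (nat \<Rightarrow> real) \<Rightarrow> ereal \<Rightarrow> (real \<Rightarrow> nat \<Rightarrow> real) \<Rightarrow> bool" where
  "mild_solution w S k u0 t1 u \<longleftrightarrow>
     (\<forall>t. 0 \<le> t \<and> ereal t < t1 \<longrightarrow> u t \<in> lw w) \<and>
     (\<forall>t0. 0 \<le> t0 \<and> ereal t0 < t1 \<longrightarrow> lw_tendsto w u (u t0) (at t0 within {t. 0 \<le> t \<and> ereal t < t1})) \<and>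
     (\<forall>t. 0 \<le> t \<and> ereal t < t1 \<longrightarrow>
        (\<forall>n. u t n = S t u0 n + integral {0..t} (\<lambda>s. S (t - s) (opK k s (u s)) n)))"

definition classical_solution :: "(nat \<Rightarrow> real) \<Rightarrow> (nat \<Rightarrow> real) \<Rightarrow> (nat \<Rightarrow> nat \<Rightarrow> real)
    \<Rightarrow> (nat \<Rightarrow> nat \<Rightarrow> real \<Rightarrow> real) \<Rightarrow> (nat \<Rightarrow> real) \<Rightarrow> ereal \<Rightarrow> (real \<Rightarrow> nat \<Rightarrow> real) \<Rightarrow> bool" where
  "classical_solution w a b k u0 t1 u \<longleftrightarrow>
     (\<forall>t. 0 \<le> t \<and> ereal t < t1 \<longrightarrow> u t \<in> lw w) \<and>
     (\<forall>t0. 0 \<le> t0 \<and> ereal t0 < t1 \<longrightarrow> lw_tendsto w u (u t0) (at t0 within {t. 0 \<le> t \<and> ereal t < t1})) \<and>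
     (\<exists>u' :: real \<Rightarrow> nat \<Rightarrow> real.
        (\<forall>t. 0 < t \<and> ereal t < t1 \<longrightarrow>
            u' t \<in> lw w \<and>
            lw_tendsto w (\<lambda>h n. (u (t + h) n - u t n) / h) (u' t) (at 0) \<and>
            lw_tendsto w u' (u' t) (at t within {s. 0 < s \<and> ereal s < t1}) \<and>
            u t \<in> domG w a b \<and>
            (u t, (\<lambda>n. u' t n - opK k t (u t) n)) \<in> graphG w a b)) \<and>
     u 0 = u0"

end

theory Submission
  imports Defs
begin

text \<open>
  Transported isometrically from \<open>\<ell>\<^sup>1\<^sub>w\<close> to \<open>\<ell>\<^sup>1\<close>, the operator \<open>G\<close> generates a
  \<open>C\<^sub>0\<close>-semigroup \<open>T\<close>, and \<open>K(t, f) = Q[k(t)](f, f)\<close> for the bilinear coagulation form \<open>Q[c]\<close>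
  with kernel \<open>c\<close>, whose norm is controlled by the constant of a bound of type (CI) for \<open>c\<close>.
  For the mild solution \<open>U\<close> the difference quotients \<open>D\<^sub>h(t) = (U(t + h) - U(t)) / h\<close> satisfy a
  Duhamel formula with forcing term
  \<open>(K(s + h, U(s + h)) - K(s, U(s))) / h
     = Q[(k(s + h) - k(s)) / h](U(s + h), U(s + h)) + Q[k(s)](D\<^sub>h(s), U(s + h)) + Q[k(s)](U(s), D\<^sub>h(s))\<close>.
  Because \<open>u\<^sub>0 \<in> D(G)\<close>, \<open>D\<^sub>h(0)\<close> converges, and Gronwall's inequality first bounds \<open>D\<^sub>h\<close> and then
  shows that it is uniformly Cauchy on compact intervals as \<open>h \<rightarrow> 0+\<close>.  The first forcing term
  converges to \<open>Q[k'(s)](U(s), U(s))\<close> uniformly in \<open>s\<close>: by the mean value theorem the difference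
  quotients of \<open>k\<close> obey the bound assumed for \<open>k'\<close> and they converge entrywise, while the compact
  orbit \<open>U([0, t\<^sub>1])\<close> has uniformly small tails.  The uniform limit \<open>U'\<close> is continuous, it is the
  two-sided derivative of \<open>U\<close>, and \<open>(T(h) U(t) - U(t)) / h \<rightarrow> U'(t) - K(t, U(t))\<close>, i.e.
  \<open>U(t) \<in> D(G)\<close>.

  Positivity of the data, symmetry of \<open>k\<close>, the hypotheses on the fragmentation coefficients and the
  maximality of \<open>u\<close> are not used: they matter only for the existence of the semigroup and of the
  mild solution, which are assumed.
\<close>

section \<open>Gronwall's inequality, uniform limits and uniform boundedness\<close>

lemma eventually_at_within_of_mem: "(\<And>x. x \<in> A \<Longrightarrow> P x) \<Longrightarrow> eventually P (at a within A)"
  by (simp add: eventually_at_filter)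

lemma gronwall:
  fixes \<phi> :: "real \<Rightarrow> real"
  assumes cont: "continuous_on {0..a} \<phi>" and beta: "\<beta> \<ge> 0"
    and ineq: "\<And>t. t \<in> {0..a} \<Longrightarrow> \<phi> t \<le> \<alpha> + \<beta> * integral {0..t} \<phi>"
    and t: "t \<in> {0..a}"
  shows "\<phi> t \<le> \<alpha> * exp (\<beta> * t)"
proof -
  define \<Phi> where "\<Phi> x = integral {0..x} \<phi>" for x
  define \<psi> where "\<psi> x = exp (- \<beta> * x) * (\<alpha> + \<beta> * \<Phi> x)" for x
  have d\<psi>: "(\<psi> has_real_derivative
      (exp (- \<beta> * x) * (\<beta> * \<phi> x) - \<beta> * exp (- \<beta> * x) * (\<alpha> + \<beta> * \<Phi> x))) (at x within {0..a})"
    if "x \<in> {0..a}" for x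
    unfolding \<psi>_def \<Phi>_def
    by (rule derivative_eq_intros integral_has_real_derivative[OF cont that] refl | simp add: algebra_simps)+
  have "\<psi> t \<le> \<psi> 0"
  proof (rule DERIV_nonpos_imp_decreasing_open[of 0 t \<psi>])
    show "continuous_on {0..t} \<psi>"
      using t by (intro continuous_on_subset[OF DERIV_continuous_on[OF d\<psi>]]) auto
    fix x assume x: "0 < x" "x < t"
    then have xa: "x \<in> {0..a}" using t by auto
    have "at x within {0..a} = at x" using x t by (intro at_within_Icc_at) auto
    then have "DERIV \<psi> x :> exp (- \<beta> * x) * (\<beta> * \<phi> x) - \<beta> * exp (- \<beta> * x) * (\<alpha> + \<beta> * \<Phi> x)"
      using d\<psi>[OF xa] by simp
    moreover have "\<beta> * \<phi> x \<le> \<beta> * (\<alpha> + \<beta> * \<Phi> x)"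
      by (rule mult_left_mono) (use ineq[OF xa] beta in \<open>auto simp: \<Phi>_def\<close>)
    then have "exp (- \<beta> * x) * (\<beta> * \<phi> x) \<le> exp (- \<beta> * x) * (\<beta> * (\<alpha> + \<beta> * \<Phi> x))"
      by (rule mult_left_mono) auto
    then have "exp (- \<beta> * x) * (\<beta> * \<phi> x) - \<beta> * exp (- \<beta> * x) * (\<alpha> + \<beta> * \<Phi> x) \<le> 0"
      by (simp add: algebra_simps)
    ultimately show "\<exists>y. DERIV \<psi> x :> y \<and> y \<le> 0" by blast
  qed (use t in simp)
  then have "\<alpha> + \<beta> * \<Phi> t \<le> \<alpha> * exp (\<beta> * t)"
    by (simp add: \<psi>_def \<Phi>_def exp_minus field_simps)
  then show ?thesis using ineq[OF t] by (simp add: \<Phi>_def)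
qed

lemma integral_affine:
  fixes \<phi> :: "real \<Rightarrow> real"
  assumes "continuous_on {0..t} \<phi>" and "t \<ge> 0"
  shows "integral {0..t} (\<lambda>s. A + B * \<phi> s) = A * t + B * integral {0..t} \<phi>"
proof -
  have "(\<lambda>s. B * \<phi> s) integrable_on {0..t}"
    by (rule integrable_continuous_interval) (intro continuous_intros assms)
  then have "integral {0..t} (\<lambda>s. A + B * \<phi> s) = integral {0..t} (\<lambda>s. A) + integral {0..t} (\<lambda>s. B * \<phi> s)"
    by (intro Henstock_Kurzweil_Integration.integral_add integrable_const_ivl)
  then show ?thesis
    using assms integral_cmul[where c=B and f=\<phi> and S="{0..t}"] by (simp add: mult.commute)
qed

lemma gronwall_affine:
  fixes \<phi> :: "real \<Rightarrow> real"
  assumes cont: "continuous_on {0..a} \<phi>" and "M \<ge> 0" "c \<ge> 0" "b \<ge> 0" "K \<ge> 0"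
    and ineq: "\<And>t. t \<in> {0..a} \<Longrightarrow> \<phi> t \<le> M * K + M * integral {0..t} (\<lambda>s. b + c * \<phi> s)"
    and t: "t \<in> {0..a}"
  shows "\<phi> t \<le> M * (K + b * a) * exp (M * c * a)"
proof -
  have "\<phi> s \<le> M * (K + b * a) + M * c * integral {0..s} \<phi>" if s: "s \<in> {0..a}" for s
  proof -
    have "integral {0..s} (\<lambda>r. b + c * \<phi> r) = b * s + c * integral {0..s} \<phi>"
      by (rule integral_affine) (use continuous_on_subset[OF cont] s in auto)
    moreover have "M * (b * s) \<le> M * (b * a)"
      using s assms by (intro mult_left_mono) auto
    ultimately show ?thesis using ineq[OF s] by (simp add: algebra_simps)
  qed
  then have "\<phi> t \<le> M * (K + b * a) * exp (M * c * t)"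
    by (intro gronwall[OF cont _ _ t]) (use assms in auto)
  also have "\<dots> \<le> M * (K + b * a) * exp (M * c * a)"
    using assms t by (intro mult_left_mono) (auto intro: mult_left_mono)
  finally show ?thesis .
qed

lemma uniform_limit_of_uniformly_Cauchy:
  fixes f :: "'i \<Rightarrow> 'b \<Rightarrow> 'a::banach"
  assumes F: "F \<noteq> bot"
    and Cauchy: "\<And>e. e > 0 \<Longrightarrow> \<exists>P. eventually P F \<and> (\<forall>i j. P i \<and> P j \<longrightarrow> (\<forall>x\<in>S. dist (f i x) (f j x) \<le> e))"
  shows "uniform_limit S f (\<lambda>x. Lim F (\<lambda>i. f i x)) F"
proof (rule uniform_limitI)
  have lim: "((\<lambda>i. f i x) \<longlongrightarrow> Lim F (\<lambda>i. f i x)) F" if x: "x \<in> S" for x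
  proof -
    have "cauchy_filter (filtermap (\<lambda>i. f i x) F)"
      unfolding cauchy_filter_metric_filtermap
    proof (intro allI impI)
      fix e :: real assume "e > 0"
      then obtain P where "eventually P F" "\<forall>i j. P i \<and> P j \<longrightarrow> dist (f i x) (f j x) \<le> e/2"
        using Cauchy[of "e/2"] x by auto
      then show "\<exists>P. eventually P F \<and> (\<forall>i j. P i \<and> P j \<longrightarrow> dist (f i x) (f j x) < e)"
        using \<open>e > 0\<close> by (intro exI[of _ P]) force
    qed
    then obtain c where "((\<lambda>i. f i x) \<longlongrightarrow> c) F"
      using F complete_UNIV complete_uniform[where S=UNIV] by (force simp: filterlim_def filtermap_bot_iff)
    then show ?thesis using F by (simp add: tendsto_Lim)
  qed
  fix e :: real assume "e > 0"
  then obtain P where P: "eventually P F" "\<forall>i j. P i \<and> P j \<longrightarrow> (\<forall>x\<in>S. dist (f i x) (f j x) \<le> e/2)"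
    using Cauchy[of "e/2"] by auto
  have "dist (f i x) (Lim F (\<lambda>i. f i x)) \<le> e/2" if "P i" "x \<in> S" for i x
    by (rule tendsto_le[OF F tendsto_const tendsto_dist[OF tendsto_const lim[OF \<open>x \<in> S\<close>]]])
       (use P that in \<open>auto elim: eventually_mono\<close>)
  then show "\<forall>\<^sub>F i in F. \<forall>x\<in>S. dist (f i x) (Lim F (\<lambda>i. f i x)) < e"
    using P(1) \<open>e > 0\<close> by (force elim: eventually_mono)
qed

text \<open>The left quotient at \<open>t\<close> is the right quotient at \<open>t - h\<close>, so uniform convergence of the
  right quotients together with continuity of the limit suffices.\<close>
lemma difference_quotient_two_sided:
  fixes U :: "real \<Rightarrow> 'a::real_normed_vector"
  assumes ul: "uniform_limit {a..b} (\<lambda>h t. (1/h) *\<^sub>R (U (t + h) - U t)) v (at_right 0)"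
    and vc: "continuous_on {a..b} v" and t: "a < t" "t < b"
  shows "((\<lambda>h. (1/h) *\<^sub>R (U (t + h) - U t)) \<longlongrightarrow> v t) (at 0)"
proof (rule filterlim_split_at)
  show "((\<lambda>h. (1/h) *\<^sub>R (U (t + h) - U t)) \<longlongrightarrow> v t) (at_right 0)"
    using tendsto_uniform_limitI[OF ul] t by simp
  have near: "eventually (\<lambda>h. t - h \<in> {a..b}) (at_right 0)"
    using t by (intro eventually_at_rightI[of 0 "t - a"]) auto
  have "((\<lambda>h. (1/h) *\<^sub>R (U (t - h + h) - U (t - h)) - v (t - h)) \<longlongrightarrow> 0) (at_right 0)"
  proof (rule tendstoI)
    fix e :: real assume "e > 0"
    show "eventually (\<lambda>h. dist ((1/h) *\<^sub>R (U (t - h + h) - U (t - h)) - v (t - h)) 0 < e) (at_right 0)"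
      using uniform_limitD[OF ul \<open>e > 0\<close>] near
    proof eventually_elim
      case (elim h)
      then show ?case using elim(1)[rule_format, of "t - h"] by (simp add: dist_norm)
    qed
  qed
  moreover have "((\<lambda>h. v (t - h)) \<longlongrightarrow> v t) (at_right 0)"
  proof (rule isCont_tendsto_compose[of _ v])
    show "isCont v t" using t by (intro continuous_on_interior[OF vc]) auto
    show "((\<lambda>h. t - h) \<longlongrightarrow> t) (at_right 0)" by (auto intro!: tendsto_eq_intros)
  qed
  ultimately have "((\<lambda>h. (1/h) *\<^sub>R (U (t - h + h) - U (t - h)) - v (t - h) + v (t - h)) \<longlongrightarrow> 0 + v t) (at_right 0)"
    by (rule tendsto_add)
  then show "((\<lambda>h. (1/h) *\<^sub>R (U (t + h) - U t)) \<longlongrightarrow> v t) (at_left 0)"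
    unfolding filterlim_at_left_to_right by (simp add: algebra_simps)
qed

lemma bounded_linear_bound_from_ball:
  assumes f: "bounded_linear f" and r: "r > 0" and ball: "\<And>y. y \<in> ball x0 r \<Longrightarrow> norm (f y) \<le> m"
  shows "norm (f x) \<le> 4 * m / r * norm x"
proof (cases "x = 0")
  case True
  then show ?thesis using f by (simp add: linear_simps)
next
  case False
  interpret bounded_linear f by (rule f)
  define c where "c = r / (2 * norm x)"
  have c: "c > 0" using r False by (simp add: c_def)
  have "norm (f (x0 + c *\<^sub>R x)) \<le> m" "norm (f x0) \<le> m"
    using r False by (auto intro!: ball simp: c_def dist_norm)
  moreover have "c * norm (f x) = norm (f (x0 + c *\<^sub>R x) - f x0)"
    using c by (simp add: add scaleR)
  ultimately have "c * norm (f x) \<le> 2 * m"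
    using norm_triangle_ineq4[of "f (x0 + c *\<^sub>R x)" "f x0"] by linarith
  then have "norm (f x) \<le> 2 * m / c" using c by (simp add: field_simps)
  also have "\<dots> = 4 * m / r * norm x" using r False by (simp add: c_def field_simps)
  finally show ?thesis .
qed

lemma uniform_boundedness:
  fixes L :: "'i \<Rightarrow> 'a::banach \<Rightarrow> 'b::real_normed_vector"
  assumes lin: "\<And>i. i \<in> I \<Longrightarrow> bounded_linear (L i)"
    and pointwise: "\<And>x. \<exists>B. \<forall>i\<in>I. norm (L i x) \<le> B"
  shows "\<exists>M>0. \<forall>i\<in>I. \<forall>x. norm (L i x) \<le> M * norm x"
proof -
  define F where "F m = (\<Inter>i\<in>I. {x. norm (L i x) \<le> real m})" for m :: nat
  have closed: "closed (F m)" for m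
    unfolding F_def
    by (intro closed_INT ballI closed_Collect_le continuous_on_norm linear_continuous_on lin
        continuous_on_const)
  have "\<exists>m. x \<in> F m" for x
  proof -
    obtain B where "\<forall>i\<in>I. norm (L i x) \<le> B" using pointwise by blast
    moreover obtain m :: nat where "B \<le> real m" using real_arch_simple by blast
    ultimately show ?thesis unfolding F_def by (auto intro: order_trans)
  qed
  then have "\<Union>(range F) = UNIV" by blast
  have "\<exists>m. interior (F m) \<noteq> {}"
  proof (rule ccontr)
    assume "\<nexists>m. interior (F m) \<noteq> {}"
    then have "euclidean interior_of \<Union>(range F) = {}"
      by (intro Baire_category_alt)
         (auto simp: completely_metrizable_space_euclidean closed_closedin[symmetric] closed)
    with \<open>\<Union>(range F) = UNIV\<close> show False by simp
  qed
  then obtain m x0 r where r: "r > 0" "ball x0 r \<subseteq> F m"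
    by (meson ex_in_conv mem_interior)
  have "norm (L i x) \<le> (4 * real m / r + 1) * norm x" if "i \<in> I" for i x
  proof -
    have "norm (L i x) \<le> 4 * real m / r * norm x"
      by (rule bounded_linear_bound_from_ball[OF lin[OF that] r(1)]) (use r that in \<open>auto simp: F_def\<close>)
    then show ?thesis by (simp add: distrib_right add_increasing2)
  qed
  moreover have "4 * real m / r + 1 > 0" using r by (simp add: add_nonneg_pos)
  ultimately show ?thesis by blast
qed



section \<open>The sequence space \<open>\<ell>\<^sup>1\<close>\<close>

typedef l1 = "{f::nat \<Rightarrow> real. f 0 = 0 \<and> summable (\<lambda>n. \<bar>f n\<bar>)}"
  morphisms l1_nth Abs_l1
  by (rule exI[of _ "\<lambda>_. 0"]) auto

setup_lifting type_definition_l1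

lemma l1_nth_0 [simp]: "l1_nth x 0 = 0"
  using l1_nth by auto

lemma summable_abs_l1_nth: "summable (\<lambda>n. \<bar>l1_nth x n\<bar>)"
  using l1_nth by auto

lemma l1_eqI: "(\<And>n. l1_nth x n = l1_nth y n) \<Longrightarrow> x = y"
  by (metis l1_nth_inject ext)

lemma summable_abs_add:
  fixes f g :: "nat \<Rightarrow> real"
  assumes "summable (\<lambda>n. \<bar>f n\<bar>)" "summable (\<lambda>n. \<bar>g n\<bar>)"
  shows "summable (\<lambda>n. \<bar>f n + g n\<bar>)"
  using summable_add[OF assms] by (rule summable_comparison_test[rotated]) auto

instantiation l1 :: real_vector
begin
lift_definition zero_l1 :: l1 is "\<lambda>_. 0" by auto
lift_definition plus_l1 :: "l1 \<Rightarrow> l1 \<Rightarrow> l1" is "\<lambda>f g n. f n + g n"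
  by (auto intro: summable_abs_add)
lift_definition uminus_l1 :: "l1 \<Rightarrow> l1" is "\<lambda>f n. - f n" by auto
lift_definition minus_l1 :: "l1 \<Rightarrow> l1 \<Rightarrow> l1" is "\<lambda>f g n. f n - g n"
  using summable_abs_add[of _ "\<lambda>n. - _ n"] by auto
lift_definition scaleR_l1 :: "real \<Rightarrow> l1 \<Rightarrow> l1" is "\<lambda>c f n. c * f n"
  by (auto simp: abs_mult intro: summable_mult)
instance
  by standard (transfer; auto simp: algebra_simps)+
end

lemma l1_nth_add [simp]: "l1_nth (x + y) n = l1_nth x n + l1_nth y n" by transfer simp
lemma l1_nth_diff [simp]: "l1_nth (x - y) n = l1_nth x n - l1_nth y n" by transfer simp
lemma l1_nth_minus [simp]: "l1_nth (- x) n = - l1_nth x n" by transfer simp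
lemma l1_nth_scaleR [simp]: "l1_nth (c *\<^sub>R x) n = c * l1_nth x n" by transfer simp
lemma l1_nth_zero [simp]: "l1_nth 0 n = 0" by transfer simp

instantiation l1 :: real_normed_vector
begin
definition norm_l1 :: "l1 \<Rightarrow> real" where "norm_l1 x = (\<Sum>n. \<bar>l1_nth x n\<bar>)"
definition sgn_l1 :: "l1 \<Rightarrow> l1" where "sgn_l1 x = x /\<^sub>R norm x"
definition dist_l1 :: "l1 \<Rightarrow> l1 \<Rightarrow> real" where "dist_l1 x y = norm (x - y)"
definition uniformity_l1 :: "(l1 \<times> l1) filter"
  where "uniformity_l1 = (INF e\<in>{0 <..}. principal {(x, y). dist x y < e})"
definition open_l1 :: "l1 set \<Rightarrow> bool"
  where "open_l1 S = (\<forall>x\<in>S. \<forall>\<^sub>F (x', y) in uniformity. x' = x \<longrightarrow> y \<in> S)"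
instance
proof
  fix x y :: l1 and a :: real
  show "norm x = 0 \<longleftrightarrow> x = 0"
  proof
    assume "norm x = 0"
    then have "\<forall>n. \<bar>l1_nth x n\<bar> = 0"
      using suminf_eq_zero_iff[OF summable_abs_l1_nth] by (simp add: norm_l1_def)
    then show "x = 0" by (intro l1_eqI) simp
  qed (simp add: norm_l1_def)
  have "(\<Sum>n. \<bar>l1_nth (x + y) n\<bar>) \<le> (\<Sum>n. \<bar>l1_nth x n\<bar> + \<bar>l1_nth y n\<bar>)"
    by (intro suminf_le summable_add summable_abs_l1_nth) simp_all
  also have "\<dots> = norm x + norm y"
    unfolding norm_l1_def by (intro suminf_add[symmetric] summable_abs_l1_nth)
  finally show "norm (x + y) \<le> norm x + norm y" by (simp add: norm_l1_def)
  show "norm (a *\<^sub>R x) = \<bar>a\<bar> * norm x"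
    unfolding norm_l1_def by (simp add: abs_mult suminf_mult[OF summable_abs_l1_nth])
qed (simp_all add: sgn_l1_def dist_l1_def uniformity_l1_def open_l1_def)
end

lemma norm_l1_eq: "norm x = (\<Sum>n. \<bar>l1_nth x n\<bar>)"
  by (simp add: norm_l1_def)

lemma abs_l1_nth_le_norm: "\<bar>l1_nth x n\<bar> \<le> norm x"
  unfolding norm_l1_eq using sum_le_suminf[OF summable_abs_l1_nth, of "{n}"] by simp

lemma sum_abs_l1_nth_le_norm: "(\<Sum>n<N. \<bar>l1_nth x n\<bar>) \<le> norm x"
  unfolding norm_l1_eq using summable_abs_l1_nth by (rule sum_le_suminf) auto

lemma bounded_linear_l1_nth: "bounded_linear (\<lambda>x. l1_nth x n)"
  by (rule bounded_linear_intro[where K=1]) (auto simp: abs_l1_nth_le_norm)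

lemma norm_l1_le:
  assumes "\<And>N. (\<Sum>n<N. \<bar>l1_nth x n\<bar>) \<le> B" shows "norm x \<le> B"
  unfolding norm_l1_eq using summable_abs_l1_nth assms by (rule suminf_le_const)

lemma l1_integral_nth:
  "f integrable_on A \<Longrightarrow> l1_nth (integral A f) n = integral A (\<lambda>s. l1_nth (f s) n)"
  using integral_linear[OF _ bounded_linear_l1_nth, of f A n] by (simp add: o_def)

lemma Cauchy_l1_partial_sums:
  assumes X: "Cauchy X" and g: "\<And>n. (\<lambda>m. l1_nth (X m) n) \<longlonglongrightarrow> g n" and e: "e > 0"
  shows "\<exists>M. \<forall>m\<ge>M. \<forall>N. (\<Sum>n<N. \<bar>l1_nth (X m) n - g n\<bar>) \<le> e"
proof -
  obtain M where M: "\<forall>m\<ge>M. \<forall>p\<ge>M. dist (X m) (X p) < e"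
    using X e unfolding Cauchy_def by blast
  have "(\<Sum>n<N. \<bar>l1_nth (X m) n - g n\<bar>) \<le> e" if "m \<ge> M" for m N
  proof (rule LIMSEQ_le_const2)
    show "(\<lambda>p. \<Sum>n<N. \<bar>l1_nth (X m) n - l1_nth (X p) n\<bar>) \<longlonglongrightarrow> (\<Sum>n<N. \<bar>l1_nth (X m) n - g n\<bar>)"
      by (intro tendsto_intros g)
    have "(\<Sum>n<N. \<bar>l1_nth (X m) n - l1_nth (X p) n\<bar>) \<le> e" if "p \<ge> M" for p
    proof -
      have "norm (X m - X p) < e" using M \<open>m \<ge> M\<close> that by (simp add: dist_l1_def)
      then show ?thesis using sum_abs_l1_nth_le_norm[of "X m - X p" N] by simp
    qed
    then show "\<exists>N0. \<forall>p\<ge>N0. (\<Sum>n<N. \<bar>l1_nth (X m) n - l1_nth (X p) n\<bar>) \<le> e" by blast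
  qed
  then show ?thesis by blast
qed

instance l1 :: banach
proof
  fix X :: "nat \<Rightarrow> l1" assume X: "Cauchy X"
  have Cauchy_nth: "Cauchy (\<lambda>m. l1_nth (X m) n)" for n
    using X unfolding Cauchy_def dist_real_def dist_l1_def
    by (metis abs_l1_nth_le_norm l1_nth_diff le_less_trans)
  define g where "g n = lim (\<lambda>m. l1_nth (X m) n)" for n
  have g: "(\<lambda>m. l1_nth (X m) n) \<longlonglongrightarrow> g n" for n
    using Cauchy_nth[of n] unfolding g_def by (simp add: Cauchy_convergent_iff convergent_LIMSEQ_iff)
  obtain M1 where M1: "\<forall>N. (\<Sum>n<N. \<bar>l1_nth (X M1) n - g n\<bar>) \<le> 1"
    using Cauchy_l1_partial_sums[OF X g, of 1] by auto
  have "summable (\<lambda>n. \<bar>l1_nth (X M1) n - g n\<bar>)"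
    by (rule summableI_nonneg_bounded[where x=1]) (use M1 in auto)
  then have "summable (\<lambda>n. \<bar>g n\<bar>)"
    using summable_abs_add[OF summable_abs_l1_nth[of "X M1"], of "\<lambda>n. g n - l1_nth (X M1) n"]
    by (simp add: abs_minus_commute)
  moreover have "g 0 = 0" using g[of 0] by (simp add: LIMSEQ_const_iff)
  ultimately have x: "l1_nth (Abs_l1 g) = g"
    by (simp add: Abs_l1_inverse)
  have "X \<longlonglongrightarrow> Abs_l1 g"
  proof (rule metric_LIMSEQ_I)
    fix r :: real assume "r > 0"
    then obtain M where M: "\<forall>m\<ge>M. \<forall>N. (\<Sum>n<N. \<bar>l1_nth (X m) n - g n\<bar>) \<le> r/2"
      using Cauchy_l1_partial_sums[OF X g, of "r/2"] by auto
    have "norm (X m - Abs_l1 g) \<le> r/2" if "m \<ge> M" for m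
      by (rule norm_l1_le) (use M that in \<open>simp add: x\<close>)
    then show "\<exists>M. \<forall>m\<ge>M. dist (X m) (Abs_l1 g) < r" using \<open>r > 0\<close> by (force simp: dist_l1_def)
  qed
  then show "convergent X" by (rule convergentI)
qed

lift_definition l1_trunc :: "nat \<Rightarrow> l1 \<Rightarrow> l1" is "\<lambda>N f n. if n < N then f n else 0"
proof safe
  fix N and f :: "nat \<Rightarrow> real" assume "summable (\<lambda>n. \<bar>f n\<bar>)"
  then show "summable (\<lambda>n. \<bar>if n < N then f n else 0\<bar>)"
    by (rule summable_comparison_test[rotated]) auto
qed auto

lemma l1_nth_trunc: "l1_nth (l1_trunc N x) n = (if n < N then l1_nth x n else 0)" by transfer simp

lemma norm_trunc_le: "norm (l1_trunc N x) \<le> norm x"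
proof -
  have s: "summable (\<lambda>n. \<bar>if n < N then l1_nth x n else 0\<bar>)"
    by (rule summable_comparison_test[OF _ summable_abs_l1_nth[of x]]) (intro exI[of _ 0], auto)
  show ?thesis unfolding norm_l1_eq l1_nth_trunc
    by (rule suminf_le[OF _ s summable_abs_l1_nth]) auto
qed

lemma norm_l1_tail_tendsto: "(\<lambda>N. norm (x - l1_trunc N x)) \<longlonglongrightarrow> 0"
proof (rule LIMSEQ_I)
  fix r :: real assume r: "r > 0"
  obtain N0 where N0: "\<forall>n\<ge>N0. norm (\<Sum>i. \<bar>l1_nth x (i + n)\<bar>) < r"
    using suminf_exist_split[OF r summable_abs_l1_nth] by blast
  show "\<exists>N0. \<forall>N\<ge>N0. norm (norm (x - l1_trunc N x) - 0) < r"
  proof (intro exI allI impI)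
    fix N assume "N \<ge> N0"
    have s: "summable (\<lambda>n. \<bar>l1_nth (x - l1_trunc N x) n\<bar>)" by (rule summable_abs_l1_nth)
    have "norm (x - l1_trunc N x) = (\<Sum>i. \<bar>l1_nth (x - l1_trunc N x) (i + N)\<bar>) + (\<Sum>i<N. \<bar>l1_nth (x - l1_trunc N x) i\<bar>)"
      unfolding norm_l1_eq by (rule suminf_split_initial_segment[OF s])
    also have "\<dots> = (\<Sum>i. \<bar>l1_nth x (i + N)\<bar>)" by (simp add: l1_nth_trunc)
    finally show "norm (norm (x - l1_trunc N x) - 0) < r" using N0 \<open>N \<ge> N0\<close> by simp
  qed
qed

lemma l1_trunc_diff: "l1_trunc N (x - y) = l1_trunc N x - l1_trunc N y"
  by (rule l1_eqI) (simp add: l1_nth_trunc)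

lemma norm_l1_tail_le: "norm (x - l1_trunc N x) \<le> norm x"
proof -
  have s: "summable (\<lambda>n. \<bar>l1_nth (x - l1_trunc N x) n\<bar>)" by (rule summable_abs_l1_nth)
  show ?thesis unfolding norm_l1_eq
    by (rule suminf_le[OF _ s summable_abs_l1_nth]) (simp add: l1_nth_trunc)
qed

lemma norm_l1_tail_antimono: "N \<le> N' \<Longrightarrow> norm (x - l1_trunc N' x) \<le> norm (x - l1_trunc N x)"
  unfolding norm_l1_eq
  by (rule suminf_le[OF _ summable_abs_l1_nth summable_abs_l1_nth]) (simp add: l1_nth_trunc)

lemma compact_uniform_l1_tails:
  assumes K: "compact K" and eta: "\<eta> > 0"
  shows "\<exists>N. \<forall>x\<in>K. norm (x - l1_trunc N x) \<le> \<eta>"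
proof -
  have "K \<subseteq> (\<Union>c\<in>K. ball c (\<eta>/2))" using eta by auto
  then obtain C where C: "C \<subseteq> K" "finite C" "K \<subseteq> (\<Union>c\<in>C. ball c (\<eta>/2))"
    using compactE_image[OF K, of K "\<lambda>c. ball c (\<eta>/2)"] by blast
  have "\<forall>c\<in>C. \<exists>N. norm (c - l1_trunc N c) < \<eta>/2"
  proof
    fix c
    have "eventually (\<lambda>N. dist (norm (c - l1_trunc N c)) 0 < \<eta>/2) sequentially"
      using tendstoD[OF norm_l1_tail_tendsto[of c], of "\<eta>/2"] eta by simp
    then have "eventually (\<lambda>N. norm (c - l1_trunc N c) < \<eta>/2) sequentially" by simp
    then show "\<exists>N. norm (c - l1_trunc N c) < \<eta>/2" by (auto simp: eventually_sequentially)
  qed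
  then obtain Nc where Nc: "\<And>c. c \<in> C \<Longrightarrow> norm (c - l1_trunc (Nc c) c) < \<eta>/2" by metis
  define N where "N = Max (insert 0 (Nc ` C))"
  have NcN: "c \<in> C \<Longrightarrow> Nc c \<le> N" for c using C(2) by (auto simp: N_def)
  show ?thesis
  proof (intro exI ballI)
    fix x assume "x \<in> K"
    then obtain c where c: "c \<in> C" "dist c x < \<eta>/2" using C(3) by auto
    have "norm (x - l1_trunc N x) = norm ((x - c) - l1_trunc N (x - c) + (c - l1_trunc N c))"
      by (simp add: l1_trunc_diff algebra_simps)
    also have "\<dots> \<le> norm ((x - c) - l1_trunc N (x - c)) + norm (c - l1_trunc N c)" by (rule norm_triangle_ineq)
    also have "\<dots> \<le> norm (x - c) + norm (c - l1_trunc (Nc c) c)"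
      by (intro add_mono norm_l1_tail_le norm_l1_tail_antimono NcN c)
    also have "\<dots> \<le> \<eta>" using c Nc[OF c(1)] by (simp add: dist_norm norm_minus_commute)
    finally show "norm (x - l1_trunc N x) \<le> \<eta>" .
  qed
qed


section \<open>Strongly continuous semigroups and mild solutions\<close>

locale C0_semigroup =
  fixes T :: "real \<Rightarrow> 'a::banach \<Rightarrow> 'a"
  assumes bounded_linear_T: "t \<ge> 0 \<Longrightarrow> bounded_linear (T t)"
    and T_0 [simp]: "T 0 x = x"
    and T_add: "t \<ge> 0 \<Longrightarrow> s \<ge> 0 \<Longrightarrow> T (t + s) x = T t (T s x)"
    and T_tendsto: "t \<ge> 0 \<Longrightarrow> ((\<lambda>s. T s x) \<longlongrightarrow> T t x) (at t within {0..})"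
begin

lemma T_linear_simps:
  assumes "t \<ge> 0"
  shows "T t (x + y) = T t x + T t y" "T t (x - y) = T t x - T t y" "T t (c *\<^sub>R x) = c *\<^sub>R T t x"
    "T t 0 = 0"
  using bounded_linear_T[OF assms] by (simp_all add: linear_simps)

lemma continuous_on_T_orbit: "continuous_on {0..} (\<lambda>s. T s x)"
  using T_tendsto by (simp add: continuous_on_def)

lemma T_uniform_bound:
  assumes "b \<ge> 0"
  shows "\<exists>M>0. \<forall>t\<in>{0..b}. \<forall>x. norm (T t x) \<le> M * norm x"
proof (rule uniform_boundedness)
  show "bounded_linear (T t)" if "t \<in> {0..b}" for t using bounded_linear_T that by simp
  fix x
  have "compact ((\<lambda>t. T t x) ` {0..b})"
    by (intro compact_continuous_image continuous_on_subset[OF continuous_on_T_orbit]) auto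
  then show "\<exists>B. \<forall>t\<in>{0..b}. norm (T t x) \<le> B"
    by (meson bounded_iff compact_imp_bounded imageI)
qed

lemma continuous_on_T_diff:
  assumes g: "continuous_on {a..b} g" and "b \<le> c"
  shows "continuous_on {a..b} (\<lambda>s. T (c - s) (g s))"
proof (cases "a \<le> b")
  case True
  obtain M where M: "\<forall>t\<in>{0..c - a}. \<forall>x. norm (T t x) \<le> M * norm x"
    using T_uniform_bound[of "c - a"] True \<open>b \<le> c\<close> by auto
  show ?thesis unfolding continuous_on_def
  proof
    fix s0 assume s0: "s0 \<in> {a..b}"
    let ?F = "at s0 within {a..b}"
    have "continuous_on {a..b} (\<lambda>s. T (c - s) (g s0))"
      by (rule continuous_on_compose2[OF continuous_on_T_orbit]) (use \<open>b \<le> c\<close> in \<open>auto intro!: continuous_intros\<close>)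
    then have "((\<lambda>s. T (c - s) (g s0)) \<longlongrightarrow> T (c - s0) (g s0)) ?F"
      using s0 unfolding continuous_on_def by blast
    moreover have "((\<lambda>s. T (c - s) (g s - g s0)) \<longlongrightarrow> 0) ?F"
    proof (rule Lim_null_comparison)
      show "eventually (\<lambda>s. norm (T (c - s) (g s - g s0)) \<le> M * norm (g s - g s0)) ?F"
        by (rule eventually_at_within_of_mem) (use M \<open>b \<le> c\<close> in auto)
      have "((\<lambda>s. g s - g s0) \<longlongrightarrow> 0) ?F"
        using g s0 unfolding continuous_on_def by (simp add: LIM_zero)
      then show "((\<lambda>s. M * norm (g s - g s0)) \<longlongrightarrow> 0) ?F"
        using tendsto_mult_right_zero tendsto_norm_zero by blast
    qed
    moreover have "eventually (\<lambda>s. T (c - s) (g s - g s0) + T (c - s) (g s0) = T (c - s) (g s)) ?F"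
      by (rule eventually_at_within_of_mem) (use \<open>b \<le> c\<close> in \<open>auto simp: T_linear_simps\<close>)
    ultimately show "((\<lambda>s. T (c - s) (g s)) \<longlongrightarrow> T (c - s0) (g s0)) ?F"
      using tendsto_add[of "\<lambda>s. T (c - s) (g s - g s0)" 0 ?F] by (force simp: tendsto_cong)
  qed
qed simp

lemma T_near_identity:
  assumes g: "continuous_on {a..b} g" and a: "a < b" and e: "e > 0"
  shows "\<exists>d>0. \<forall>r s. 0 \<le> r \<and> r < d \<and> s \<in> {a..b} \<and> s - a < d \<longrightarrow> norm (T r (g s) - g a) \<le> e"
proof -
  obtain M where M: "M > 0" "\<forall>r\<in>{0..b - a}. \<forall>x. norm (T r x) \<le> M * norm x"
    using T_uniform_bound[of "b - a"] a by auto
  obtain d1 where d1: "d1 > 0" "\<forall>s\<in>{a..b}. dist s a < d1 \<longrightarrow> dist (g s) (g a) < e / (2 * M)"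
  proof -
    have "a \<in> {a..b}" "e / (2 * M) > 0" using a e M by auto
    then show ?thesis using g that unfolding continuous_on_iff by blast
  qed
  obtain d2 where d2: "d2 > 0" "\<forall>r\<in>{0..}. 0 < dist r 0 \<and> dist r 0 < d2 \<longrightarrow> dist (T r (g a)) (g a) < e / 2"
    using T_tendsto[of 0 "g a", unfolded Lim_within T_0] e by (meson half_gt_zero order_refl)
  define d where "d = min (b - a) (min d1 d2)"
  have "norm (T r (g s) - g a) \<le> e" if r: "0 \<le> r" "r < d" and s: "s \<in> {a..b}" "s - a < d" for r s
  proof -
    have rd: "r \<in> {0..b - a}" using r by (auto simp: d_def)
    have "norm (T r (g s) - g a) \<le> norm (T r (g s - g a)) + norm (T r (g a) - g a)"
      using norm_triangle_ineq[of "T r (g s - g a)" "T r (g a) - g a"] r by (simp add: T_linear_simps)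
    also have "norm (T r (g s - g a)) \<le> M * norm (g s - g a)" using M rd by blast
    also have "\<dots> \<le> M * (e / (2 * M))"
      using d1 s M by (intro mult_left_mono) (auto simp: d_def dist_norm dist_real_def)
    also have "norm (T r (g a) - g a) \<le> e / 2"
      using d2 r e by (cases "r = 0") (auto simp: d_def dist_norm less_imp_le)
    finally show ?thesis using M by simp
  qed
  moreover have "d > 0" using a d1 d2 by (simp add: d_def)
  ultimately show ?thesis by blast
qed

lemma tendsto_T_average:
  assumes g: "continuous_on {a..b} g" and ab: "a < b"
  shows "((\<lambda>h. (1/h) *\<^sub>R integral {a..a+h} (\<lambda>s. T (a + h - s) (g s))) \<longlongrightarrow> g a) (at_right 0)"
proof (rule tendstoI)
  fix e :: real assume e: "e > 0"
  then obtain d where d: "d > 0"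
    and near: "\<And>r s. 0 \<le> r \<Longrightarrow> r < d \<Longrightarrow> s \<in> {a..b} \<Longrightarrow> s - a < d \<Longrightarrow> norm (T r (g s) - g a) \<le> e/2"
    using T_near_identity[OF g ab, of "e/2"] by auto
  show "eventually (\<lambda>h. dist ((1/h) *\<^sub>R integral {a..a+h} (\<lambda>s. T (a + h - s) (g s))) (g a) < e) (at_right 0)"
  proof (rule eventually_at_rightI[of 0 "min d (b - a)"])
    fix h assume h: "h \<in> {0<..<min d (b - a)}"
    have cont: "continuous_on {a..a+h} (\<lambda>s. T (a + h - s) (g s))"
      by (intro continuous_on_T_diff continuous_on_subset[OF g]) (use h in auto)
    have "integral {a..a+h} (\<lambda>s. T (a + h - s) (g s) - g a)
        = integral {a..a+h} (\<lambda>s. T (a + h - s) (g s)) - h *\<^sub>R g a"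
      using h by (subst integral_diff[OF integrable_continuous_interval[OF cont] integrable_const_ivl]) auto
    moreover have "norm (integral {a..a+h} (\<lambda>s. T (a + h - s) (g s) - g a)) \<le> e/2 * (a + h - a)"
    proof (rule integral_bound)
      fix s assume "s \<in> {a..a+h}"
      then show "norm (T (a + h - s) (g s) - g a) \<le> e/2" by (intro near) (use h in auto)
    qed (use h cont in \<open>auto intro!: continuous_intros\<close>)
    moreover have "(1/h) *\<^sub>R integral {a..a+h} (\<lambda>s. T (a + h - s) (g s)) - g a
        = (1/h) *\<^sub>R (integral {a..a+h} (\<lambda>s. T (a + h - s) (g s)) - h *\<^sub>R g a)"
      using h by (simp add: scaleR_diff_right scaleR_add_right)
    ultimately have "norm ((1/h) *\<^sub>R integral {a..a+h} (\<lambda>s. T (a + h - s) (g s)) - g a) \<le> e/2"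
      using h by (simp add: divide_le_eq mult.commute)
    then show "dist ((1/h) *\<^sub>R integral {a..a+h} (\<lambda>s. T (a + h - s) (g s))) (g a) < e"
      using e by (simp add: dist_norm)
  qed (use d ab in auto)
qed

definition mild_on :: "real \<Rightarrow> (real \<Rightarrow> 'a) \<Rightarrow> (real \<Rightarrow> 'a) \<Rightarrow> bool" where
  "mild_on b U F \<longleftrightarrow> continuous_on {0..b} F \<and>
     (\<forall>t\<in>{0..b}. U t = T t (U 0) + integral {0..t} (\<lambda>s. T (t - s) (F s)))"

lemma integrable_T_diff:
  "continuous_on {a..b} g \<Longrightarrow> b \<le> c \<Longrightarrow> (\<lambda>s. T (c - s) (g s)) integrable_on {a..b}"
  by (intro integrable_continuous_interval continuous_on_T_diff)

lemma mild_onD: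
  assumes "mild_on b U F" and "0 \<le> t" "t \<le> b"
  shows "U t = T t (U 0) + integral {0..t} (\<lambda>s. T (t - s) (F s))"
  using assms unfolding mild_on_def by (meson atLeastAtMost_iff)

lemma mild_on_continuous:
  assumes "mild_on b U F" and "0 \<le> a" "c \<le> b"
  shows "continuous_on {a..c} F"
proof -
  have "continuous_on {0..b} F" using assms(1) unfolding mild_on_def by blast
  then show ?thesis by (rule continuous_on_subset) (use assms in auto)
qed

lemma mild_on_shift:
  assumes mild: "mild_on b U F" and a: "a \<ge> 0" and h: "h \<ge> 0" and ah: "a + h \<le> b"
  shows "U (a + h) = T h (U a) + integral {a..a+h} (\<lambda>s. T (a + h - s) (F s))"
proof -
  have Fa: "continuous_on {0..a} F" and Fah: "continuous_on {0..a+h} F"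
    using mild_on_continuous[OF mild order_refl] h ah by auto
  note U = mild_onD[OF mild]
  have "integral {0..a} (\<lambda>s. T (a + h - s) (F s)) = integral {0..a} (\<lambda>s. T h (T (a - s) (F s)))"
  proof (rule integral_cong)
    fix s assume "s \<in> {0..a}"
    then show "T (a + h - s) (F s) = T h (T (a - s) (F s))"
      using T_add[OF h, of "a - s" "F s"] by (simp add: add.commute add_diff_eq)
  qed
  also have "\<dots> = T h (integral {0..a} (\<lambda>s. T (a - s) (F s)))"
    using integral_linear[OF integrable_T_diff[OF Fa order_refl] bounded_linear_T[OF h]] ah h
    by (simp add: o_def)
  finally have split: "integral {0..a+h} (\<lambda>s. T (a + h - s) (F s))
      = T h (integral {0..a} (\<lambda>s. T (a - s) (F s))) + integral {a..a+h} (\<lambda>s. T (a + h - s) (F s))"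
    using Henstock_Kurzweil_Integration.integral_combine[OF a _ integrable_T_diff[OF Fah order_refl]] h
    by simp
  have "U (a + h) = T h (T a (U 0)) + integral {0..a+h} (\<lambda>s. T (a + h - s) (F s))"
    using U[of "a + h"] T_add[OF h a] a h ah by (simp add: add.commute)
  also have "\<dots> = T h (U a) + integral {a..a+h} (\<lambda>s. T (a + h - s) (F s))"
    unfolding split U[OF a order_trans[OF le_add_same_cancel1[THEN iffD2, OF h] ah]]
    using h by (simp add: T_linear_simps)
  finally show ?thesis .
qed

lemma mild_on_difference_quotient:
  assumes mild: "mild_on b U F" and t: "t \<ge> 0" and h: "h > 0" and th: "t + h \<le> b"
  shows "(1/h) *\<^sub>R (U (t + h) - U t)
    = T t ((1/h) *\<^sub>R (U h - U 0)) + integral {0..t} (\<lambda>s. T (t - s) ((1/h) *\<^sub>R (F (s + h) - F s)))"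
proof -
  have F: "continuous_on {0..b} F" using mild_on_continuous[OF mild order_refl order_refl] .
  have c1: "continuous_on {0..t} F" by (rule continuous_on_subset[OF F]) (use h th in auto)
  have c2: "continuous_on {0..t} (\<lambda>s. F (s + h))"
    by (rule continuous_on_compose2[OF F]) (use t h th in \<open>auto intro!: continuous_intros\<close>)
  have "U (h + t) = T t (U h) + integral {h..h+t} (\<lambda>s. T (h + t - s) (F s))"
    by (rule mild_on_shift[OF mild]) (use h t th in auto)
  also have "integral {h..h+t} (\<lambda>s. T (h + t - s) (F s)) = integral {0..t} (\<lambda>s. T (t - s) (F (s + h)))"
    using integral_shift_Icc_real[of 0 t "\<lambda>s. T (h + t - s) (F s)" h] by (simp add: o_def add.commute)
  finally have shifted: "U (t + h) = T t (U h) + integral {0..t} (\<lambda>s. T (t - s) (F (s + h)))"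
    by (simp add: add.commute)
  have "integral {0..t} (\<lambda>s. T (t - s) ((1/h) *\<^sub>R (F (s + h) - F s)))
      = (1/h) *\<^sub>R (integral {0..t} (\<lambda>s. T (t - s) (F (s + h))) - integral {0..t} (\<lambda>s. T (t - s) (F s)))"
  proof -
    have "integral {0..t} (\<lambda>s. T (t - s) ((1/h) *\<^sub>R (F (s + h) - F s)))
        = integral {0..t} (\<lambda>s. (1/h) *\<^sub>R (T (t - s) (F (s + h)) - T (t - s) (F s)))"
      by (rule integral_cong) (simp add: T_linear_simps)
    also have "\<dots> = (1/h) *\<^sub>R integral {0..t} (\<lambda>s. T (t - s) (F (s + h)) - T (t - s) (F s))"
      by (rule integral_cmul)
    finally show ?thesis
      by (simp add: integral_diff[OF integrable_T_diff[OF c2] integrable_T_diff[OF c1]])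
  qed
  moreover have "U t = T t (U 0) + integral {0..t} (\<lambda>s. T (t - s) (F s))"
    using mild_onD[OF mild t] h th by simp
  ultimately show ?thesis
    unfolding shifted using t by (simp add: T_linear_simps algebra_simps)
qed

lemma mild_on_quotient_at_0:
  assumes mild: "mild_on b U F" and b: "b > 0"
    and A: "((\<lambda>h. (1/h) *\<^sub>R (T h (U 0) - U 0)) \<longlongrightarrow> A0) (at_right 0)"
  shows "((\<lambda>h. (1/h) *\<^sub>R (U h - U 0)) \<longlongrightarrow> A0 + F 0) (at_right 0)"
proof -
  let ?I = "\<lambda>h. (1/h) *\<^sub>R integral {0..0+h} (\<lambda>s. T (0 + h - s) (F s))"
  have "((\<lambda>h. (1/h) *\<^sub>R (T h (U 0) - U 0) + ?I h) \<longlongrightarrow> A0 + F 0) (at_right 0)"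
    using mild_on_continuous[OF mild order_refl order_refl] b by (intro tendsto_add A tendsto_T_average) auto
  moreover have "(1/h) *\<^sub>R (T h (U 0) - U 0) + ?I h = (1/h) *\<^sub>R (U h - U 0)" if "0 < h" "h < b" for h
    using mild_on_shift[OF mild, of 0 h] that by (simp add: scaleR_diff_right scaleR_add_right)
  then have "eventually (\<lambda>h. (1/h) *\<^sub>R (T h (U 0) - U 0) + ?I h = (1/h) *\<^sub>R (U h - U 0)) (at_right 0)"
    using b by (intro eventually_at_rightI[of 0 b]) auto
  ultimately show ?thesis by (simp add: tendsto_cong)
qed

lemma mild_on_generator:
  assumes mild: "mild_on b U F" and t: "0 \<le> t" "t < b"
    and v: "((\<lambda>h. (1/h) *\<^sub>R (U (t + h) - U t)) \<longlongrightarrow> v) (at_right 0)"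
  shows "((\<lambda>h. (1/h) *\<^sub>R (T h (U t) - U t)) \<longlongrightarrow> v - F t) (at_right 0)"
proof -
  let ?I = "\<lambda>h. (1/h) *\<^sub>R integral {t..t+h} (\<lambda>s. T (t + h - s) (F s))"
  have "((\<lambda>h. (1/h) *\<^sub>R (U (t + h) - U t) - ?I h) \<longlongrightarrow> v - F t) (at_right 0)"
    using mild_on_continuous[OF mild t(1) order_refl] t by (intro tendsto_diff v tendsto_T_average) auto
  moreover have "(1/h) *\<^sub>R (U (t + h) - U t) - ?I h = (1/h) *\<^sub>R (T h (U t) - U t)" if "0 < h" "h < b - t" for h
    using mild_on_shift[OF mild, of t h] that t by (simp add: scaleR_diff_right scaleR_add_right)
  then have "eventually (\<lambda>h. (1/h) *\<^sub>R (U (t + h) - U t) - ?I h = (1/h) *\<^sub>R (T h (U t) - U t)) (at_right 0)"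
    using t by (intro eventually_at_rightI[of 0 "b - t"]) auto
  ultimately show ?thesis by (simp add: tendsto_cong)
qed

lemma norm_duhamel_le:
  assumes M: "\<And>r x. r \<in> {0..t} \<Longrightarrow> norm (T r x) \<le> M * norm x" and "M \<ge> 0" and "t \<ge> 0"
    and X: "continuous_on {0..t} X" and g: "continuous_on {0..t} g"
    and Xg: "\<And>s. s \<in> {0..t} \<Longrightarrow> norm (X s) \<le> g s"
  shows "norm (T t x + integral {0..t} (\<lambda>s. T (t - s) (X s))) \<le> M * norm x + M * integral {0..t} g"
proof -
  have "norm (integral {0..t} (\<lambda>s. T (t - s) (X s))) \<le> integral {0..t} (\<lambda>s. M * g s)"
  proof (rule integral_norm_bound_integral)
    show "(\<lambda>s. T (t - s) (X s)) integrable_on {0..t}" by (rule integrable_T_diff[OF X]) simp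
    show "(\<lambda>s. M * g s) integrable_on {0..t}"
      by (intro integrable_continuous_interval continuous_intros g)
    fix s assume s: "s \<in> {0..t}"
    have "norm (T (t - s) (X s)) \<le> M * norm (X s)" using M[of "t - s"] s by auto
    also have "\<dots> \<le> M * g s" using Xg[OF s] \<open>M \<ge> 0\<close> by (rule mult_left_mono)
    finally show "norm (T (t - s) (X s)) \<le> M * g s" .
  qed
  also have "\<dots> = M * integral {0..t} g" by (rule integral_mult_right)
  finally have "norm (integral {0..t} (\<lambda>s. T (t - s) (X s))) \<le> M * integral {0..t} g" .
  moreover have "norm (T t x) \<le> M * norm x" using M[of t x] \<open>t \<ge> 0\<close> by simp
  ultimately show ?thesis
    using norm_triangle_ineq[of "T t x" "integral {0..t} (\<lambda>s. T (t - s) (X s))"] by linarith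
qed

end


section \<open>The weighted space \<open>\<ell>\<^sup>1\<^sub>w\<close>\<close>

text \<open>The weighted space \<open>\<ell>\<^sup>1\<^sub>w\<close> is identified with \<open>\<ell>\<^sup>1\<close> through the isometry
  \<open>f \<mapsto> (w\<^sub>n f\<^sub>n)\<^sub>n\<close>, so that it inherits a Banach space structure.\<close>
locale weight =
  fixes w :: "nat \<Rightarrow> real"
  assumes w_ge_1: "\<And>n. n \<ge> 1 \<Longrightarrow> w n \<ge> 1"
begin

definition to_l1 :: "(nat \<Rightarrow> real) \<Rightarrow> l1" where
  "to_l1 f = Abs_l1 (\<lambda>n. if n = 0 then 0 else w n * f n)"

definition of_l1 :: "l1 \<Rightarrow> nat \<Rightarrow> real" where
  "of_l1 x = (\<lambda>n. if n = 0 then 0 else l1_nth x n / w n)"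

lemma w_pos [simp]: "n \<noteq> 0 \<Longrightarrow> w n > 0"
  using w_ge_1[of n] by simp

lemma w_nonzero [simp]: "n \<noteq> 0 \<Longrightarrow> w n \<noteq> 0"
  using w_pos[of n] by linarith

lemma w_nonneg [simp]: "n \<noteq> 0 \<Longrightarrow> 0 \<le> w n"
  using w_pos[of n] by linarith

lemma abs_w [simp]: "n \<noteq> 0 \<Longrightarrow> \<bar>w n\<bar> = w n"
  using w_pos[of n] by linarith

lemma lw_zero: "f \<in> lw w \<Longrightarrow> f 0 = 0"
  by (simp add: lw_def)

lemma l1_nth_to_l1: "f \<in> lw w \<Longrightarrow> l1_nth (to_l1 f) n = (if n = 0 then 0 else w n * f n)"
proof -
  assume "f \<in> lw w"
  then have "summable (\<lambda>n. \<bar>if n = 0 then 0 else w n * f n\<bar>)"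
    unfolding lw_def by (auto elim!: summable_comparison_test[rotated] simp: abs_mult intro!: exI[of _ 0])
  then show ?thesis unfolding to_l1_def by (subst Abs_l1_inverse) auto
qed

lemma norm_to_l1: "f \<in> lw w \<Longrightarrow> norm (to_l1 f) = wnorm w f"
  unfolding norm_l1_eq wnorm_def
  by (rule suminf_cong) (auto simp: l1_nth_to_l1 lw_zero abs_mult less_imp_le)

lemma of_l1_in_lw [simp]: "of_l1 x \<in> lw w"
  unfolding lw_def of_l1_def
  by (auto intro!: summable_cong[THEN iffD1, OF _ summable_abs_l1_nth[of x]] eventuallyI
      simp: abs_div less_imp_le)

lemma to_l1_of_l1 [simp]: "to_l1 (of_l1 x) = x"
proof (rule l1_eqI)
  show "l1_nth (to_l1 (of_l1 x)) n = l1_nth x n" for n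
    using l1_nth_to_l1[OF of_l1_in_lw, of x n] by (cases "n = 0") (simp_all add: of_l1_def)
qed

lemma of_l1_to_l1 [simp]: "f \<in> lw w \<Longrightarrow> of_l1 (to_l1 f) = f"
  by (rule ext) (auto simp: l1_nth_to_l1 of_l1_def lw_zero)

lemma to_l1_inject: "f \<in> lw w \<Longrightarrow> g \<in> lw w \<Longrightarrow> to_l1 f = to_l1 g \<Longrightarrow> f = g"
  by (metis of_l1_to_l1)

lemma lw_lincomb: "f \<in> lw w \<Longrightarrow> g \<in> lw w \<Longrightarrow> (\<lambda>n. c * f n + d * g n) \<in> lw w"
proof -
  assume f: "f \<in> lw w" and g: "g \<in> lw w"
  have "(\<lambda>n. c * f n + d * g n) = of_l1 (c *\<^sub>R to_l1 f + d *\<^sub>R to_l1 g)"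
    using f g by (auto simp: of_l1_def l1_nth_to_l1 lw_zero field_simps)
  then show ?thesis by simp
qed

lemma to_l1_lincomb:
  "f \<in> lw w \<Longrightarrow> g \<in> lw w \<Longrightarrow> to_l1 (\<lambda>n. c * f n + d * g n) = c *\<^sub>R to_l1 f + d *\<^sub>R to_l1 g"
  by (rule l1_eqI) (auto simp: l1_nth_to_l1 lw_lincomb algebra_simps)

lemma of_l1_lincomb: "of_l1 (c *\<^sub>R x + d *\<^sub>R y) = (\<lambda>n. c * of_l1 x n + d * of_l1 y n)"
  by (rule to_l1_inject) (simp_all add: to_l1_lincomb lw_lincomb)

lemma lw_diff: "f \<in> lw w \<Longrightarrow> g \<in> lw w \<Longrightarrow> (\<lambda>n. f n - g n) \<in> lw w"
  using lw_lincomb[of f g 1 "-1"] by simp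

lemma to_l1_diff: "f \<in> lw w \<Longrightarrow> g \<in> lw w \<Longrightarrow> to_l1 (\<lambda>n. f n - g n) = to_l1 f - to_l1 g"
  using to_l1_lincomb[of f g 1 "-1"] by simp

lemma lw_diff_quotient: "f \<in> lw w \<Longrightarrow> g \<in> lw w \<Longrightarrow> (\<lambda>n. (f n - g n) / c) \<in> lw w"
  using lw_lincomb[of f g "1/c" "-1/c"] by (simp add: diff_divide_distrib)

lemma to_l1_diff_quotient:
  "f \<in> lw w \<Longrightarrow> g \<in> lw w \<Longrightarrow> to_l1 (\<lambda>n. (f n - g n) / c) = (1/c) *\<^sub>R (to_l1 f - to_l1 g)"
  using to_l1_lincomb[of f g "1/c" "-1/c"] by (simp add: diff_divide_distrib algebra_simps)

lemma wnorm_diff: "f \<in> lw w \<Longrightarrow> g \<in> lw w \<Longrightarrow> wnorm w (\<lambda>n. f n - g n) = norm (to_l1 f - to_l1 g)"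
  using norm_to_l1[OF lw_diff] to_l1_diff by simp

lemma lw_tendsto_iff:
  assumes "eventually (\<lambda>x. F x \<in> lw w) L" and "g \<in> lw w"
  shows "lw_tendsto w F g L \<longleftrightarrow> ((\<lambda>x. to_l1 (F x)) \<longlongrightarrow> to_l1 g) L"
proof -
  have "lw_tendsto w F g L \<longleftrightarrow> ((\<lambda>x. norm (to_l1 (F x) - to_l1 g)) \<longlongrightarrow> 0) L"
    unfolding lw_tendsto_def
    by (rule tendsto_cong) (use assms(1) in \<open>eventually_elim, use assms(2) wnorm_diff in auto\<close>)
  then show ?thesis by (simp add: tendsto_norm_zero_iff LIM_zero_iff)
qed

end

locale weighted_semigroup = weight +
  fixes S :: "real \<Rightarrow> (nat \<Rightarrow> real) \<Rightarrow> nat \<Rightarrow> real" and P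
  assumes generates: "C0_semigroup_gen w S P"
begin

definition T :: "real \<Rightarrow> l1 \<Rightarrow> l1" where "T t x = to_l1 (S t (of_l1 x))"

lemma S_in_lw: "t \<ge> 0 \<Longrightarrow> f \<in> lw w \<Longrightarrow> S t f \<in> lw w"
  using generates unfolding C0_semigroup_gen_def by blast

lemma S_0: "f \<in> lw w \<Longrightarrow> S 0 f = f"
  using generates unfolding C0_semigroup_gen_def by blast

lemma T_to_l1: "t \<ge> 0 \<Longrightarrow> f \<in> lw w \<Longrightarrow> T t (to_l1 f) = to_l1 (S t f)"
  by (simp add: T_def)

lemma bounded_linear_weighted_T: assumes "t \<ge> 0" shows "bounded_linear (T t)"
proof -
  have lin: "S t (\<lambda>n. c * f n + d * g n) = (\<lambda>n. c * S t f n + d * S t g n)"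
    if "f \<in> lw w" "g \<in> lw w" for f g c d
    using generates assms that unfolding C0_semigroup_gen_def by blast
  obtain M where M: "\<forall>f\<in>lw w. wnorm w (S t f) \<le> M * wnorm w f"
    using generates assms unfolding C0_semigroup_gen_def by blast
  have lincomb: "T t (c *\<^sub>R x + d *\<^sub>R y) = c *\<^sub>R T t x + d *\<^sub>R T t y" for c d x y
    unfolding T_def of_l1_lincomb by (simp add: lin to_l1_lincomb S_in_lw assms)
  show ?thesis
  proof (rule bounded_linear_intro[where K=M])
    show "T t (x + y) = T t x + T t y" for x y using lincomb[of 1 x 1 y] by simp
    show "T t (r *\<^sub>R x) = r *\<^sub>R T t x" for r x using lincomb[of r x 0 x] by simp
    show "norm (T t x) \<le> norm x * M" for x
      using M[rule_format, of "of_l1 x"] norm_to_l1[OF of_l1_in_lw, of x]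
      by (simp add: T_def norm_to_l1 S_in_lw assms mult.commute)
  qed
qed

sublocale C0_semigroup T
proof (rule C0_semigroup.intro)
  show "bounded_linear (T t)" if "t \<ge> 0" for t using bounded_linear_weighted_T[OF that] .
  show "T 0 x = x" for x by (simp add: T_def S_0)
  show "T (t + s) x = T t (T s x)" if "t \<ge> 0" "s \<ge> 0" for t s x
    using generates S_in_lw that unfolding C0_semigroup_gen_def T_def by simp
  show "((\<lambda>s. T s x) \<longlongrightarrow> T t x) (at t within {0..})" if t: "t \<ge> 0" for t x
  proof -
    have "lw_tendsto w (\<lambda>s. S s (of_l1 x)) (S t (of_l1 x)) (at t within {0..})"
      using generates t unfolding C0_semigroup_gen_def by simp
    moreover have "eventually (\<lambda>s. S s (of_l1 x) \<in> lw w) (at t within {0..})"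
      by (rule eventually_at_within_of_mem) (simp add: S_in_lw)
    then have "lw_tendsto w (\<lambda>s. S s (of_l1 x)) (S t (of_l1 x)) (at t within {0..}) \<longleftrightarrow>
        ((\<lambda>s. to_l1 (S s (of_l1 x))) \<longlongrightarrow> to_l1 (S t (of_l1 x))) (at t within {0..})"
      by (rule lw_tendsto_iff[OF _ S_in_lw[OF t of_l1_in_lw]])
    ultimately show ?thesis unfolding T_def by simp
  qed
qed

lemma generator_iff:
  assumes f: "f \<in> lw w" and g: "g \<in> lw w"
  shows "(f, g) \<in> P \<longleftrightarrow> ((\<lambda>h. (1/h) *\<^sub>R (T h (to_l1 f) - to_l1 f)) \<longlongrightarrow> to_l1 g) (at_right 0)"
proof -
  have "(f, g) \<in> P \<longleftrightarrow> lw_tendsto w (\<lambda>h n. (S h f n - f n) / h) g (at_right 0)"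
    using generates f g unfolding C0_semigroup_gen_def by blast
  also have "\<dots> \<longleftrightarrow> ((\<lambda>h. to_l1 (\<lambda>n. (S h f n - f n) / h)) \<longlongrightarrow> to_l1 g) (at_right 0)"
    by (rule lw_tendsto_iff[OF _ g])
       (auto intro!: eventually_at_rightI[of 0 1] lw_diff_quotient S_in_lw f)
  also have "\<dots> \<longleftrightarrow> ((\<lambda>h. (1/h) *\<^sub>R (T h (to_l1 f) - to_l1 f)) \<longlongrightarrow> to_l1 g) (at_right 0)"
    by (rule tendsto_cong) (auto intro!: eventually_at_rightI[of 0 1] simp: to_l1_diff_quotient S_in_lw f T_to_l1)
  finally show ?thesis .
qed

end

section \<open>The coagulation form\<close>

definition coag :: "(nat \<Rightarrow> nat \<Rightarrow> real) \<Rightarrow> (nat \<Rightarrow> real) \<Rightarrow> (nat \<Rightarrow> real) \<Rightarrow> nat \<Rightarrow> real" where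
  "coag c f g n = (if n = 0 then 0 else
      (1/2) * (\<Sum>j\<in>{1..<n}. c (n - j) j * f (n - j) * g j)
      - (\<Sum>j. c n (Suc j) * f n * g (Suc j)))"

lemma opK_eq_coag: "opK k t f = coag (\<lambda>n j. k n j t) f f"
  by (simp add: opK_def coag_def fun_eq_iff)

lemma coag_kernel_zero_index: "coag (\<lambda>n j. if n = 0 \<or> j = 0 then 0 else c n j) f g = coag c f g"
proof
  fix n
  have e1: "(\<Sum>j\<in>{1..<n}. (if n - j = 0 \<or> j = 0 then 0 else c (n - j) j) * f (n - j) * g j) = (\<Sum>j\<in>{1..<n}. c (n - j) j * f (n - j) * g j)"
    by (rule sum.cong) auto
  show "coag (\<lambda>n j. if n = 0 \<or> j = 0 then 0 else c n j) f g n = coag c f g n"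
    unfolding coag_def e1 by simp
qed

locale monotone_weight = weight +
  assumes w_mono: "\<And>n m. 1 \<le> n \<Longrightarrow> n \<le> m \<Longrightarrow> w n \<le> w m"
begin

definition kernel_bound :: "real \<Rightarrow> (nat \<Rightarrow> nat \<Rightarrow> real) \<Rightarrow> bool" where
  "kernel_bound C c \<longleftrightarrow> (\<forall>n\<ge>1. \<forall>j\<ge>1. \<bar>c n j\<bar> \<le> C * w n * w j / w (n + j))"

lemma kernel_boundD: "kernel_bound C c \<Longrightarrow> n \<noteq> 0 \<Longrightarrow> j \<noteq> 0 \<Longrightarrow> \<bar>c n j\<bar> \<le> C * w n * w j / w (n + j)"
  unfolding kernel_bound_def by (simp add: Suc_le_eq)

lemma kernel_bound_nonneg: "kernel_bound C c \<Longrightarrow> C \<ge> 0"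
proof -
  assume "kernel_bound C c"
  from kernel_boundD[OF this, of 1 1] have h: "0 \<le> C * w 1 * w 1 / w 2" by (simp add: numeral_2_eq_2)
  have p: "w 1 > 0" "w 2 > 0" by simp_all
  show "C \<ge> 0"
  proof (rule ccontr)
    assume "\<not> C \<ge> 0"
    then have "C * w 1 * w 1 < 0" using p by (simp add: mult_neg_pos)
    then have "C * w 1 * w 1 / w 2 < 0" using p by (simp add: divide_neg_pos)
    then show False using h by simp
  qed
qed

lemma abs_kernel_le:
  assumes "kernel_bound C c" "n \<noteq> 0" "j \<noteq> 0"
  shows "\<bar>c n j\<bar> \<le> C * w j"
proof -
  have "w n / w (n + j) \<le> 1" using w_mono[of n "n + j"] assms by simp
  then have "C * w j * (w n / w (n + j)) \<le> C * w j"
    using kernel_bound_nonneg[OF assms(1)] w_pos[OF assms(3)]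
    by (metis mult_left_le mult_nonneg_nonneg less_imp_le)
  then show ?thesis using kernel_boundD[OF assms] by (simp add: field_simps)
qed

lemma loss_term_bound:
  assumes "kernel_bound C c" "n \<noteq> 0" "j \<noteq> 0"
  shows "\<bar>c n j * x * y\<bar> \<le> C * \<bar>x\<bar> * (w j * \<bar>y\<bar>)"
  using mult_right_mono[OF abs_kernel_le[OF assms], of "\<bar>x\<bar> * \<bar>y\<bar>"]
  by (simp add: abs_mult algebra_simps)

lemma weighted_loss_term_bound:
  assumes "kernel_bound C c" "n \<noteq> 0" "j \<noteq> 0"
  shows "w n * \<bar>c n j * x * y\<bar> \<le> C * (w n * \<bar>x\<bar>) * (w j * \<bar>y\<bar>)"
  using mult_left_mono[OF loss_term_bound[OF assms], of "w n" x y] assms(2)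
  by (simp add: algebra_simps)

lemma kernel_bound_lincomb: "kernel_bound C c \<Longrightarrow> kernel_bound D d \<Longrightarrow> kernel_bound (\<bar>\<alpha>\<bar> * C + \<bar>\<beta>\<bar> * D) (\<lambda>n j. \<alpha> * c n j + \<beta> * d n j)"
proof -
  assume c: "kernel_bound C c" and d: "kernel_bound D d"
  show ?thesis unfolding kernel_bound_def
  proof (intro allI impI)
    fix n j :: nat assume "n \<ge> 1" "j \<ge> 1"
    then have nj: "n \<noteq> 0" "j \<noteq> 0" by auto
    have "\<bar>\<alpha> * c n j + \<beta> * d n j\<bar> \<le> \<bar>\<alpha>\<bar> * \<bar>c n j\<bar> + \<bar>\<beta>\<bar> * \<bar>d n j\<bar>"
      by (metis abs_mult abs_triangle_ineq)
    also have "\<dots> \<le> \<bar>\<alpha>\<bar> * (C * w n * w j / w (n + j)) + \<bar>\<beta>\<bar> * (D * w n * w j / w (n + j))"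
      by (intro add_mono mult_left_mono kernel_boundD[OF c nj] kernel_boundD[OF d nj]) auto
    also have "\<dots> = (\<bar>\<alpha>\<bar> * C + \<bar>\<beta>\<bar> * D) * w n * w j / w (n + j)"
      by (simp add: add_divide_distrib ring_distribs mult.assoc)
    finally show "\<bar>\<alpha> * c n j + \<beta> * d n j\<bar> \<le> (\<bar>\<alpha>\<bar> * C + \<bar>\<beta>\<bar> * D) * w n * w j / w (n + j)" .
  qed
qed

lemma gain_term_bound:
  assumes c: "kernel_bound C c" and j: "j \<in> {1..<n}"
  shows "w n * \<bar>c (n - j) j * x * y\<bar> \<le> C * (w (n - j) * \<bar>x\<bar>) * (w j * \<bar>y\<bar>)"
proof -
  have nj: "n - j \<noteq> 0" "j \<noteq> 0" and e: "n - j + j = n" using j by auto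
  have "\<bar>c (n - j) j\<bar> \<le> C * w (n - j) * w j / w n" using kernel_boundD[OF c nj] e by simp
  then have "w n * \<bar>c (n - j) j\<bar> \<le> C * w (n - j) * w j"
    using w_pos[of n] j by (simp add: field_simps)
  then have "w n * \<bar>c (n - j) j\<bar> * (\<bar>x\<bar> * \<bar>y\<bar>) \<le> C * w (n - j) * w j * (\<bar>x\<bar> * \<bar>y\<bar>)"
    by (intro mult_right_mono) auto
  then show ?thesis by (simp add: abs_mult algebra_simps)
qed

definition wabs :: "(nat \<Rightarrow> real) \<Rightarrow> nat \<Rightarrow> real" where "wabs f i = w i * \<bar>f i\<bar>"

lemma wabs_nonneg: "f \<in> lw w \<Longrightarrow> wabs f i \<ge> 0"
  by (cases "i = 0") (auto simp: wabs_def lw_zero intro!: mult_nonneg_nonneg)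

lemma summable_wabs: "f \<in> lw w \<Longrightarrow> summable (wabs f)"
  by (simp add: wabs_def[abs_def] lw_def)

lemma suminf_wabs: "f \<in> lw w \<Longrightarrow> suminf (wabs f) = wnorm w f"
  by (simp add: wabs_def[abs_def] wnorm_def)

lemma wabs_0: "f \<in> lw w \<Longrightarrow> wabs f 0 = 0" by (simp add: wabs_def lw_zero)

lemma loss_summable:
  assumes c: "kernel_bound C c" and g: "g \<in> lw w" and n: "n \<noteq> 0"
  shows "summable (\<lambda>j. \<bar>c n (Suc j) * x * g (Suc j)\<bar>)"
proof -
  have "summable (\<lambda>j. C * \<bar>x\<bar> * wabs g (Suc j))"
    using summable_wabs[OF g] by (intro summable_mult) (simp add: summable_Suc_iff)
  then show ?thesis
    by (rule summable_comparison_test[rotated])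
       (auto simp: wabs_def intro!: exI[of _ 0] loss_term_bound[OF c n])
qed

lemma loss_sum_bound:
  assumes c: "kernel_bound C c" and g: "g \<in> lw w" and n: "n \<noteq> 0"
  shows "w n * \<bar>\<Sum>j. c n (Suc j) * f n * g (Suc j)\<bar> \<le> C * wabs f n * wnorm w g"
proof -
  have s: "summable (\<lambda>j. \<bar>c n (Suc j) * f n * g (Suc j)\<bar>)" by (rule loss_summable[OF c g n])
  have s2: "summable (\<lambda>j. C * wabs f n * wabs g (Suc j))"
    using summable_wabs[OF g] by (intro summable_mult) (simp add: summable_Suc_iff)
  have "\<bar>\<Sum>j. c n (Suc j) * f n * g (Suc j)\<bar> \<le> (\<Sum>j. \<bar>c n (Suc j) * f n * g (Suc j)\<bar>)"
    by (rule summable_rabs[OF s])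
  then have "w n * \<bar>\<Sum>j. c n (Suc j) * f n * g (Suc j)\<bar> \<le> w n * (\<Sum>j. \<bar>c n (Suc j) * f n * g (Suc j)\<bar>)"
    using w_pos[OF n] by (intro mult_left_mono) auto
  also have "\<dots> = (\<Sum>j. w n * \<bar>c n (Suc j) * f n * g (Suc j)\<bar>)"
    by (rule suminf_mult[OF s, symmetric])
  also have "\<dots> \<le> (\<Sum>j. C * wabs f n * wabs g (Suc j))"
    by (rule suminf_le[OF _ summable_mult[OF s] s2])
       (use weighted_loss_term_bound[OF c n] in \<open>simp add: wabs_def\<close>)
  also have "\<dots> = C * wabs f n * (\<Sum>j. wabs g (Suc j))"
    by (rule suminf_mult) (use summable_wabs[OF g] in \<open>simp add: summable_Suc_iff\<close>)
  also have "(\<Sum>j. wabs g (Suc j)) = wnorm w g"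
    using suminf_split_head[OF summable_wabs[OF g]] wabs_0[OF g] suminf_wabs[OF g] by simp
  finally show ?thesis .
qed

lemma gain_sum_bound:
  assumes c: "kernel_bound C c" and f: "f \<in> lw w" and g: "g \<in> lw w"
  shows "w n * \<bar>\<Sum>j\<in>{1..<n}. c (n - j) j * f (n - j) * g j\<bar> \<le> C * (\<Sum>i\<le>n. wabs g i * wabs f (n - i))"
proof -
  have C: "C \<ge> 0" using kernel_bound_nonneg[OF c] .
  have "w n * \<bar>\<Sum>j\<in>{1..<n}. c (n - j) j * f (n - j) * g j\<bar> \<le> w n * (\<Sum>j\<in>{1..<n}. \<bar>c (n - j) j * f (n - j) * g j\<bar>)"
    by (cases "n = 0") (auto intro!: mult_left_mono sum_abs)
  also have "\<dots> = (\<Sum>j\<in>{1..<n}. w n * \<bar>c (n - j) j * f (n - j) * g j\<bar>)"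
    by (simp add: sum_distrib_left)
  also have "\<dots> \<le> (\<Sum>j\<in>{1..<n}. C * (wabs f (n - j) * wabs g j))"
    by (rule sum_mono) (use gain_term_bound[OF c] in \<open>simp add: wabs_def mult.assoc\<close>)
  also have "\<dots> = C * (\<Sum>j\<in>{1..<n}. wabs f (n - j) * wabs g j)"
    by (simp add: sum_distrib_left)
  also have "(\<Sum>j\<in>{1..<n}. wabs f (n - j) * wabs g j) \<le> (\<Sum>i\<le>n. wabs g i * wabs f (n - i))"
    by (subst mult.commute, rule sum_mono2) (auto intro!: mult_nonneg_nonneg wabs_nonneg f g)
  finally show ?thesis using C by (simp add: mult_left_mono)
qed

lemma coag_term_bound:
  assumes c: "kernel_bound C c" and f: "f \<in> lw w" and g: "g \<in> lw w"
  shows "w n * \<bar>coag c f g n\<bar> \<le> C/2 * (\<Sum>i\<le>n. wabs g i * wabs f (n - i)) + C * wabs f n * wnorm w g"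
proof (cases "n = 0")
  case True then show ?thesis
    using kernel_bound_nonneg[OF c] wabs_nonneg[OF f] wabs_nonneg[OF g] wnorm_def
    by (simp add: wabs_0[OF f] wabs_0[OF g] coag_def)
next
  case False
  let ?G = "\<Sum>j\<in>{1..<n}. c (n - j) j * f (n - j) * g j"
  let ?L = "\<Sum>j. c n (Suc j) * f n * g (Suc j)"
  have "w n * \<bar>coag c f g n\<bar> = w n * \<bar>(1/2) * ?G - ?L\<bar>" using False by (simp add: coag_def)
  also have "\<dots> \<le> (1/2) * (w n * \<bar>?G\<bar>) + w n * \<bar>?L\<bar>"
  proof -
    have "\<bar>(1/2) * ?G - ?L\<bar> \<le> (1/2) * \<bar>?G\<bar> + \<bar>?L\<bar>" by (simp add: abs_mult abs_triangle_ineq4)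
    then have "w n * \<bar>(1/2) * ?G - ?L\<bar> \<le> w n * ((1/2) * \<bar>?G\<bar> + \<bar>?L\<bar>)"
      using False by (intro mult_left_mono) auto
    then show ?thesis by (simp add: algebra_simps)
  qed
  also have "\<dots> \<le> (1/2) * (C * (\<Sum>i\<le>n. wabs g i * wabs f (n - i))) + C * wabs f n * wnorm w g"
    by (intro add_mono mult_left_mono gain_sum_bound[OF c f g] loss_sum_bound[OF c g False]) auto
  finally show ?thesis by simp
qed

lemma coag_lw_bound:
  assumes c: "kernel_bound C c" and f: "f \<in> lw w" and g: "g \<in> lw w"
  shows "coag c f g \<in> lw w" "wnorm w (coag c f g) \<le> 3/2 * C * wnorm w f * wnorm w g"
proof -
  have sa: "summable (\<lambda>k. norm (wabs g k))" "summable (\<lambda>k. norm (wabs f k))"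
    using summable_wabs[OF f] summable_wabs[OF g] wabs_nonneg[OF f] wabs_nonneg[OF g] by simp_all
  have cp: "summable (\<lambda>k. \<Sum>i\<le>k. wabs g i * wabs f (k - i))"
    using summable_Cauchy_product[OF sa] .
  have cpv: "(\<Sum>k. \<Sum>i\<le>k. wabs g i * wabs f (k - i)) = wnorm w f * wnorm w g"
    using Cauchy_product[OF sa] suminf_wabs[OF f] suminf_wabs[OF g] by (simp add: mult.commute)
  have sb: "summable (\<lambda>n. C/2 * (\<Sum>i\<le>n. wabs g i * wabs f (n - i)) + C * wabs f n * wnorm w g)"
    by (intro summable_add summable_mult cp summable_mult2 summable_wabs f)
  have s: "summable (\<lambda>n. w n * \<bar>coag c f g n\<bar>)"
  proof (rule summable_comparison_test[OF _ sb])
    show "\<exists>N. \<forall>n\<ge>N. norm (w n * \<bar>coag c f g n\<bar>) \<le> C/2 * (\<Sum>i\<le>n. wabs g i * wabs f (n - i)) + C * wabs f n * wnorm w g"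
    proof (intro exI allI impI)
      fix n :: nat
      have "w n * \<bar>coag c f g n\<bar> \<ge> 0" by (cases "n=0") (simp_all add: coag_def)
      then show "norm (w n * \<bar>coag c f g n\<bar>) \<le> C/2 * (\<Sum>i\<le>n. wabs g i * wabs f (n - i)) + C * wabs f n * wnorm w g"
        using coag_term_bound[OF c f g, of n] by simp
    qed
  qed
  show "coag c f g \<in> lw w" using s by (simp add: lw_def coag_def)
  have "wnorm w (coag c f g) \<le> (\<Sum>n. C/2 * (\<Sum>i\<le>n. wabs g i * wabs f (n - i)) + C * wabs f n * wnorm w g)"
    unfolding wnorm_def[of w "coag c f g"] by (rule suminf_le[OF coag_term_bound[OF c f g] s sb])
  also have "\<dots> = C/2 * (wnorm w f * wnorm w g) + C * wnorm w f * wnorm w g"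
  proof -
    have s1: "summable (\<lambda>n. C/2 * (\<Sum>i\<le>n. wabs g i * wabs f (n - i)))" by (rule summable_mult[OF cp])
    have s0: "summable (\<lambda>n. C * wabs f n)" by (rule summable_mult[OF summable_wabs[OF f]])
    have s2: "summable (\<lambda>n. C * wabs f n * wnorm w g)" by (rule summable_mult2[OF s0])
    have e2: "(\<Sum>n. C/2 * (\<Sum>i\<le>n. wabs g i * wabs f (n - i))) = C/2 * (wnorm w f * wnorm w g)"
      using suminf_mult[OF cp, of "C/2"] cpv by simp
    have e3: "(\<Sum>n. C * wabs f n * wnorm w g) = C * wnorm w f * wnorm w g"
      using suminf_mult2[OF s0, of "wnorm w g"] suminf_mult[OF summable_wabs[OF f], of C] suminf_wabs[OF f] by simp
    show ?thesis using suminf_add[OF s1 s2] e2 e3 by simp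
  qed
  also have "\<dots> = 3/2 * C * wnorm w f * wnorm w g" by (simp add: algebra_simps)
  finally show "wnorm w (coag c f g) \<le> 3/2 * C * wnorm w f * wnorm w g" .
qed


definition loss_sum :: "(nat \<Rightarrow> nat \<Rightarrow> real) \<Rightarrow> (nat \<Rightarrow> real) \<Rightarrow> nat \<Rightarrow> real" where
  "loss_sum c g n = (\<Sum>j. c n (Suc j) * g (Suc j))"

lemma summable_loss_sum:
  assumes c: "kernel_bound C c" and g: "g \<in> lw w" and n: "n \<noteq> 0"
  shows "summable (\<lambda>j. c n (Suc j) * g (Suc j))"
  using summable_rabs_cancel[of "\<lambda>j. c n (Suc j) * g (Suc j)"] loss_summable[OF c g n, of 1] by simp

lemma coag_eq_loss_sum:
  assumes c: "kernel_bound C c" and g: "g \<in> lw w"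
  shows "coag c f g n = (if n = 0 then 0 else
      (1/2) * (\<Sum>j\<in>{1..<n}. c (n - j) j * f (n - j) * g j) - f n * loss_sum c g n)"
proof (cases "n = 0")
  case False
  have "(\<Sum>j. c n (Suc j) * f n * g (Suc j)) = (\<Sum>j. f n * (c n (Suc j) * g (Suc j)))"
    by (simp add: algebra_simps)
  also have "\<dots> = f n * loss_sum c g n"
    unfolding loss_sum_def by (rule suminf_mult[OF summable_loss_sum[OF c g False]])
  finally show ?thesis using False by (simp add: coag_def)
qed (simp add: coag_def)

lemma loss_sum_lincomb:
  assumes c: "kernel_bound C c" and g: "g \<in> lw w" and g': "g' \<in> lw w" and n: "n \<noteq> 0"
  shows "loss_sum c (\<lambda>m. \<alpha> * g m + \<beta> * g' m) n = \<alpha> * loss_sum c g n + \<beta> * loss_sum c g' n"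
proof -
  have "(\<lambda>j. c n (Suc j) * (\<alpha> * g (Suc j) + \<beta> * g' (Suc j))) sums (\<alpha> * loss_sum c g n + \<beta> * loss_sum c g' n)"
  proof -
    have "(\<lambda>j. \<alpha> * (c n (Suc j) * g (Suc j)) + \<beta> * (c n (Suc j) * g' (Suc j))) sums (\<alpha> * loss_sum c g n + \<beta> * loss_sum c g' n)"
      unfolding loss_sum_def
      by (intro sums_add sums_mult summable_sums summable_loss_sum[OF c g n] summable_loss_sum[OF c g' n])
    then show ?thesis by (simp add: algebra_simps)
  qed
  then show ?thesis unfolding loss_sum_def[of c "\<lambda>m. \<alpha> * g m + \<beta> * g' m"] by (rule sums_unique[symmetric])
qed

lemma loss_sum_kernel_lincomb:
  assumes c: "kernel_bound C c" and d: "kernel_bound D d" and g: "g \<in> lw w" and n: "n \<noteq> 0"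
  shows "loss_sum (\<lambda>a b. \<alpha> * c a b + \<beta> * d a b) g n = \<alpha> * loss_sum c g n + \<beta> * loss_sum d g n"
proof -
  have "(\<lambda>j. \<alpha> * (c n (Suc j) * g (Suc j)) + \<beta> * (d n (Suc j) * g (Suc j))) sums (\<alpha> * loss_sum c g n + \<beta> * loss_sum d g n)"
    unfolding loss_sum_def
    by (intro sums_add sums_mult summable_sums summable_loss_sum[OF c g n] summable_loss_sum[OF d g n])
  then have "(\<lambda>j. (\<alpha> * c n (Suc j) + \<beta> * d n (Suc j)) * g (Suc j)) sums (\<alpha> * loss_sum c g n + \<beta> * loss_sum d g n)"
    by (simp add: algebra_simps)
  then show ?thesis unfolding loss_sum_def[of "\<lambda>a b. \<alpha> * c a b + \<beta> * d a b"] by (rule sums_unique[symmetric])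
qed

lemma coag_lincomb_left:
  assumes c: "kernel_bound C c" and f: "f \<in> lw w" and f': "f' \<in> lw w" and g: "g \<in> lw w"
  shows "coag c (\<lambda>m. \<alpha> * f m + \<beta> * f' m) g = (\<lambda>n. \<alpha> * coag c f g n + \<beta> * coag c f' g n)"
proof
  fix n
  show "coag c (\<lambda>m. \<alpha> * f m + \<beta> * f' m) g n = \<alpha> * coag c f g n + \<beta> * coag c f' g n"
    unfolding coag_eq_loss_sum[OF c g]
    by (simp add: algebra_simps sum.distrib sum_distrib_left)
qed

lemma coag_lincomb_right:
  assumes c: "kernel_bound C c" and f: "f \<in> lw w" and g: "g \<in> lw w" and g': "g' \<in> lw w"
  shows "coag c f (\<lambda>m. \<alpha> * g m + \<beta> * g' m) = (\<lambda>n. \<alpha> * coag c f g n + \<beta> * coag c f g' n)"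
proof
  fix n
  have gg: "(\<lambda>m. \<alpha> * g m + \<beta> * g' m) \<in> lw w" by (rule lw_lincomb[OF g g'])
  show "coag c f (\<lambda>m. \<alpha> * g m + \<beta> * g' m) n = \<alpha> * coag c f g n + \<beta> * coag c f g' n"
    unfolding coag_eq_loss_sum[OF c gg] coag_eq_loss_sum[OF c g] coag_eq_loss_sum[OF c g']
    by (cases "n = 0") (simp_all add: loss_sum_lincomb[OF c g g'] algebra_simps sum.distrib sum_distrib_left)
qed

lemma coag_kernel_lincomb:
  assumes c: "kernel_bound C c" and d: "kernel_bound D d" and f: "f \<in> lw w" and g: "g \<in> lw w"
  shows "coag (\<lambda>a b. \<alpha> * c a b + \<beta> * d a b) f g = (\<lambda>n. \<alpha> * coag c f g n + \<beta> * coag d f g n)"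
proof
  fix n
  have cd: "kernel_bound (\<bar>\<alpha>\<bar> * C + \<bar>\<beta>\<bar> * D) (\<lambda>a b. \<alpha> * c a b + \<beta> * d a b)" by (rule kernel_bound_lincomb[OF c d])
  show "coag (\<lambda>a b. \<alpha> * c a b + \<beta> * d a b) f g n = \<alpha> * coag c f g n + \<beta> * coag d f g n"
    unfolding coag_eq_loss_sum[OF cd g] coag_eq_loss_sum[OF c g] coag_eq_loss_sum[OF d g]
    by (cases "n = 0") (simp_all add: loss_sum_kernel_lincomb[OF c d g] algebra_simps sum.distrib sum_distrib_left)
qed

definition coag_l1 :: "(nat \<Rightarrow> nat \<Rightarrow> real) \<Rightarrow> l1 \<Rightarrow> l1 \<Rightarrow> l1" where
  "coag_l1 c x y = to_l1 (coag c (of_l1 x) (of_l1 y))"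

lemma norm_coag_l1_le:
  assumes c: "kernel_bound C c" shows "norm (coag_l1 c x y) \<le> 3/2 * C * norm x * norm y"
  using coag_lw_bound[OF c of_l1_in_lw of_l1_in_lw, of x y]
  by (simp add: coag_l1_def norm_to_l1 norm_to_l1[OF of_l1_in_lw, symmetric])

lemma coag_l1_lincomb_left:
  assumes c: "kernel_bound C c"
  shows "coag_l1 c (\<alpha> *\<^sub>R x + \<beta> *\<^sub>R x') y = \<alpha> *\<^sub>R coag_l1 c x y + \<beta> *\<^sub>R coag_l1 c x' y"
  unfolding coag_l1_def of_l1_lincomb coag_lincomb_left[OF c of_l1_in_lw of_l1_in_lw of_l1_in_lw]
  by (rule to_l1_lincomb) (rule coag_lw_bound[OF c of_l1_in_lw of_l1_in_lw])+

lemma coag_l1_lincomb_right: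
  assumes c: "kernel_bound C c"
  shows "coag_l1 c x (\<alpha> *\<^sub>R y + \<beta> *\<^sub>R y') = \<alpha> *\<^sub>R coag_l1 c x y + \<beta> *\<^sub>R coag_l1 c x y'"
  unfolding coag_l1_def of_l1_lincomb coag_lincomb_right[OF c of_l1_in_lw of_l1_in_lw of_l1_in_lw]
  by (rule to_l1_lincomb) (rule coag_lw_bound[OF c of_l1_in_lw of_l1_in_lw])+

lemma coag_l1_kernel_lincomb:
  assumes c: "kernel_bound C c" and d: "kernel_bound D d"
  shows "coag_l1 (\<lambda>a b. \<alpha> * c a b + \<beta> * d a b) x y = \<alpha> *\<^sub>R coag_l1 c x y + \<beta> *\<^sub>R coag_l1 d x y"
  unfolding coag_l1_def coag_kernel_lincomb[OF c d of_l1_in_lw of_l1_in_lw]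
  by (rule to_l1_lincomb) (rule coag_lw_bound[OF c of_l1_in_lw of_l1_in_lw] coag_lw_bound[OF d of_l1_in_lw of_l1_in_lw])+

lemma bounded_bilinear_coag_l1:
  assumes c: "kernel_bound C c" shows "bounded_bilinear (coag_l1 c)"
proof
  show "coag_l1 c (a + a') b = coag_l1 c a b + coag_l1 c a' b" for a a' b using coag_l1_lincomb_left[OF c, of 1 a 1 a' b] by simp
  show "coag_l1 c a (b + b') = coag_l1 c a b + coag_l1 c a b'" for a b b' using coag_l1_lincomb_right[OF c, of a 1 b 1 b'] by simp
  show "coag_l1 c (r *\<^sub>R a) b = r *\<^sub>R coag_l1 c a b" for r a b using coag_l1_lincomb_left[OF c, of r a 0 a b] by simp
  show "coag_l1 c a (r *\<^sub>R b) = r *\<^sub>R coag_l1 c a b" for r a b using coag_l1_lincomb_right[OF c, of a r b 0 b] by simp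
  show "\<exists>K. \<forall>a b. norm (coag_l1 c a b) \<le> norm a * norm b * K"
    using norm_coag_l1_le[OF c] by (intro exI[of _ "3/2 * C"]) (simp add: algebra_simps)
qed

lemma coag_l1_kernel_diff:
  assumes c: "kernel_bound C c" and d: "kernel_bound D d"
  shows "coag_l1 (\<lambda>a b. c a b - d a b) x y = coag_l1 c x y - coag_l1 d x y"
  using coag_l1_kernel_lincomb[OF c d, of 1 "-1" x y] by simp

lemma coag_l1_kernel_scale:
  assumes c: "kernel_bound C c"
  shows "coag_l1 (\<lambda>a b. \<alpha> * c a b) x y = \<alpha> *\<^sub>R coag_l1 c x y"
  using coag_l1_kernel_lincomb[OF c c, of \<alpha> 0 x y] by simp

lemma coag_l1_diff_square:
  assumes c: "kernel_bound C c"
  shows "coag_l1 c x x - coag_l1 c y y = coag_l1 c (x - y) x + coag_l1 c y (x - y)"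
proof -
  interpret bounded_bilinear "coag_l1 c" by (rule bounded_bilinear_coag_l1[OF c])
  show ?thesis by (simp add: diff_left diff_right)
qed

lemma norm_coag_l1_diff_square_le:
  assumes c: "kernel_bound C c"
  shows "norm (coag_l1 c x x - coag_l1 c y y) \<le> 3/2 * C * norm (x - y) * (norm x + norm y)"
proof -
  have "norm (coag_l1 c x x - coag_l1 c y y) \<le> norm (coag_l1 c (x - y) x) + norm (coag_l1 c y (x - y))"
    unfolding coag_l1_diff_square[OF c] by (rule norm_triangle_ineq)
  also have "\<dots> \<le> 3/2 * C * norm (x - y) * norm x + 3/2 * C * norm y * norm (x - y)"
    by (intro add_mono norm_coag_l1_le[OF c])
  finally show ?thesis by (simp add: algebra_simps)
qed

lemma of_l1_trunc: "m \<ge> N \<Longrightarrow> of_l1 (l1_trunc N x) m = 0"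
  by (simp add: of_l1_def l1_nth_trunc)

definition kernel_restrict :: "nat \<Rightarrow> (nat \<Rightarrow> nat \<Rightarrow> real) \<Rightarrow> nat \<Rightarrow> nat \<Rightarrow> real" where
  "kernel_restrict N c a b = (if a < N \<and> b < N then c a b else 0)"

lemma coag_kernel_restrict:
  assumes f: "\<And>m. m \<ge> N \<Longrightarrow> f m = 0" and g: "\<And>m. m \<ge> N \<Longrightarrow> g m = 0"
  shows "coag c f g = coag (kernel_restrict N c) f g"
proof
  fix n
  have t1: "c (n - j) j * f (n - j) * g j = kernel_restrict N c (n - j) j * f (n - j) * g j" for j
    using f[of "n - j"] g[of j] by (cases "n - j < N"; cases "j < N") (auto simp: kernel_restrict_def)
  have t2: "c n (Suc j) * f n * g (Suc j) = kernel_restrict N c n (Suc j) * f n * g (Suc j)" for j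
    using f[of n] g[of "Suc j"] by (cases "n < N"; cases "Suc j < N") (auto simp: kernel_restrict_def)
  have e1: "(\<Sum>j\<in>{1..<n}. c (n - j) j * f (n - j) * g j) = (\<Sum>j\<in>{1..<n}. kernel_restrict N c (n - j) j * f (n - j) * g j)"
    by (rule sum.cong[OF refl t1])
  have e2: "(\<Sum>j. c n (Suc j) * f n * g (Suc j)) = (\<Sum>j. kernel_restrict N c n (Suc j) * f n * g (Suc j))"
    by (rule suminf_cong[OF t2])
  show "coag c f g n = coag (kernel_restrict N c) f g n" unfolding coag_def e1 e2 ..
qed

lemma coag_l1_trunc_restrict: "coag_l1 c (l1_trunc N x) (l1_trunc N y) = coag_l1 (kernel_restrict N c) (l1_trunc N x) (l1_trunc N y)"
  unfolding coag_l1_def by (subst coag_kernel_restrict[of N]) (auto simp: of_l1_trunc)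

lemma kernel_bound_restrict:
  assumes e: "e \<ge> 0" and small: "\<And>a b. a < N \<Longrightarrow> b < N \<Longrightarrow> \<bar>c a b\<bar> \<le> e"
  shows "kernel_bound (e * w (Suc (2 * N))) (kernel_restrict N c)"
  unfolding kernel_bound_def
proof (intro allI impI)
  fix a b :: nat assume ab: "1 \<le> a" "1 \<le> b"
  show "\<bar>kernel_restrict N c a b\<bar> \<le> e * w (Suc (2 * N)) * w a * w b / w (a + b)"
  proof (cases "a < N \<and> b < N")
    case True
    have wa: "w a \<ge> 1" "w b \<ge> 1" using ab w_ge_1 by auto
    have "w (a + b) \<le> w (Suc (2 * N))" using True ab by (intro w_mono) auto
    moreover have "w (a + b) > 0" using ab by simp
    ultimately have q: "1 \<le> w (Suc (2 * N)) / w (a + b)" by simp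
    have p: "1 * 1 \<le> w a * w b" using wa by (intro mult_mono) auto
    have "w (Suc (2 * N)) / w (a + b) * 1 \<le> w (Suc (2 * N)) / w (a + b) * (w a * w b)"
      using p q by (intro mult_left_mono) auto
    with q have "1 \<le> w (Suc (2 * N)) / w (a + b) * (w a * w b)" by simp
    then have "1 \<le> w (Suc (2 * N)) * w a * w b / w (a + b)" by (simp add: field_simps)
    then have "e * 1 \<le> e * (w (Suc (2 * N)) * w a * w b / w (a + b))" using e by (intro mult_left_mono) auto
    then show ?thesis using small[of a b] True by (simp add: kernel_restrict_def mult.assoc)
  next
    case False
    have "0 \<le> e * w (Suc (2 * N)) * w a * w b / w (a + b)"
      using e ab by (intro divide_nonneg_pos mult_nonneg_nonneg) auto
    moreover have "kernel_restrict N c a b = 0" using False unfolding kernel_restrict_def by auto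
    ultimately show ?thesis by simp
  qed
qed

lemma coag_l1_split_trunc:
  assumes c: "kernel_bound C c"
  shows "coag_l1 c y y = coag_l1 c (l1_trunc N y) (l1_trunc N y) + coag_l1 c (y - l1_trunc N y) y + coag_l1 c (l1_trunc N y) (y - l1_trunc N y)"
proof -
  interpret bounded_bilinear "coag_l1 c" by (rule bounded_bilinear_coag_l1[OF c])
  have "coag_l1 c y y = coag_l1 c (l1_trunc N y + (y - l1_trunc N y)) y" by simp
  also have "\<dots> = coag_l1 c (l1_trunc N y) y + coag_l1 c (y - l1_trunc N y) y" by (rule add_left)
  also have "coag_l1 c (l1_trunc N y) y = coag_l1 c (l1_trunc N y) (l1_trunc N y + (y - l1_trunc N y))" by simp
  also have "\<dots> = coag_l1 c (l1_trunc N y) (l1_trunc N y) + coag_l1 c (l1_trunc N y) (y - l1_trunc N y)" by (rule add_right)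
  finally show ?thesis by (simp add: algebra_simps)
qed

text \<open>Split \<open>y\<close> into its head below \<open>N\<close> and its tail: on the head only the finitely many
  kernel entries below \<open>N\<close> matter, the tail is small in norm.\<close>
lemma norm_coag_l1_head_tail_le:
  assumes d: "kernel_bound D d" and head: "kernel_bound E (kernel_restrict N d)"
    and y: "norm y \<le> R" and tail: "norm (y - l1_trunc N y) \<le> \<eta>"
  shows "norm (coag_l1 d y y) \<le> 3/2 * E * R * R + 3 * D * \<eta> * R"
proof -
  let ?t = "l1_trunc N y"
  have D: "D \<ge> 0" and E: "E \<ge> 0" using kernel_bound_nonneg d head by auto
  have t: "norm ?t \<le> R" using norm_trunc_le[of N y] y by linarith
  have "norm (coag_l1 d y y) \<le> norm (coag_l1 (kernel_restrict N d) ?t ?t) + norm (coag_l1 d (y - ?t) y)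
      + norm (coag_l1 d ?t (y - ?t))"
    unfolding coag_l1_split_trunc[OF d, of y N] coag_l1_trunc_restrict[of d N y y, symmetric]
    by (rule norm_triangle_le, rule add_right_mono, rule norm_triangle_ineq)
  also have "norm (coag_l1 (kernel_restrict N d) ?t ?t) \<le> 3/2 * E * R * R"
  proof -
    have "3/2 * E * norm ?t * norm ?t \<le> 3/2 * E * R * R"
      using t E order_trans[OF norm_ge_zero t] by (intro mult_mono mult_left_mono) auto
    then show ?thesis using norm_coag_l1_le[OF head, of ?t ?t] by linarith
  qed
  also have "norm (coag_l1 d (y - ?t) y) \<le> 3/2 * D * \<eta> * R"
  proof -
    have "3/2 * D * norm (y - ?t) * norm y \<le> 3/2 * D * \<eta> * R"
      using tail y D order_trans[OF norm_ge_zero tail] by (intro mult_mono mult_left_mono) auto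
    then show ?thesis using norm_coag_l1_le[OF d, of "y - ?t" y] by linarith
  qed
  also have "norm (coag_l1 d ?t (y - ?t)) \<le> 3/2 * D * R * \<eta>"
  proof -
    have "3/2 * D * norm ?t * norm (y - ?t) \<le> 3/2 * D * R * \<eta>"
      using tail t D order_trans[OF norm_ge_zero t] by (intro mult_mono mult_left_mono) auto
    then show ?thesis using norm_coag_l1_le[OF d, of ?t "y - ?t"] by linarith
  qed
  finally show ?thesis by (simp add: algebra_simps)
qed

lemma coag_l1_uniformly_small:
  fixes d :: "'h \<Rightarrow> 'p \<Rightarrow> nat \<Rightarrow> nat \<Rightarrow> real" and y :: "'p \<Rightarrow> l1"
  assumes K: "compact (y ` P)" and D: "D \<ge> 0"
    and bound: "eventually (\<lambda>h. \<forall>p\<in>P. kernel_bound D (d h p)) F"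
    and entrywise: "\<And>a b \<eta>. \<eta> > 0 \<Longrightarrow> eventually (\<lambda>h. \<forall>p\<in>P. \<bar>d h p a b\<bar> \<le> \<eta>) F"
    and e: "e > 0"
  shows "eventually (\<lambda>h. \<forall>p\<in>P. norm (coag_l1 (d h p) (y p) (y p)) \<le> e) F"
proof -
  obtain R where R: "R > 0" "\<And>p. p \<in> P \<Longrightarrow> norm (y p) \<le> R"
    using compact_imp_bounded[OF K] by (auto simp: bounded_pos)
  define \<eta> where "\<eta> = e / (6 * (D + 1) * R)"
  have \<eta>: "\<eta> > 0" using e D R by (simp add: \<eta>_def)
  have "3 * D * \<eta> * R \<le> 3 * (D + 1) * \<eta> * R" using \<eta> R by (intro mult_right_mono) auto
  also have "\<dots> = e/2"
  proof -
    have "6 * (D + 1) * R \<noteq> 0" using R D by simp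
    then show ?thesis unfolding \<eta>_def by (simp add: field_simps)
  qed
  finally have \<eta>_small: "3 * D * \<eta> * R \<le> e/2" .
  obtain N where tails: "\<And>p. p \<in> P \<Longrightarrow> norm (y p - l1_trunc N (y p)) \<le> \<eta>"
    using compact_uniform_l1_tails[OF K \<eta>] by auto
  define W where "W = w (Suc (2 * N))"
  define e' where "e' = e / (3 * W * R\<^sup>2)"
  have W: "W > 0" by (simp add: W_def)
  have e': "e' > 0" "3/2 * (e' * W) * R * R = e/2"
    using e W R by (auto simp: e'_def power2_eq_square field_simps)
  have "eventually (\<lambda>h. \<forall>ab\<in>{..<N} \<times> {..<N}. \<forall>p\<in>P. \<bar>d h p (fst ab) (snd ab)\<bar> \<le> e') F"
    by (rule eventually_ball_finite) (auto intro: entrywise[OF e'(1)])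
  with bound show ?thesis
  proof eventually_elim
    case (elim h)
    show ?case
    proof
      fix p assume p: "p \<in> P"
      have "kernel_bound (e' * W) (kernel_restrict N (d h p))"
        unfolding W_def by (rule kernel_bound_restrict) (use e' elim p in auto)
      then have "norm (coag_l1 (d h p) (y p) (y p)) \<le> 3/2 * (e' * W) * R * R + 3 * D * \<eta> * R"
        using elim p by (intro norm_coag_l1_head_tail_le[OF _ _ R(2)[OF p] tails[OF p]]) auto
      then show "norm (coag_l1 (d h p) (y p) (y p)) \<le> e" using e' \<eta>_small by linarith
    qed
  qed
qed

lemma coag_l1_tendsto_zero:
  fixes d :: "'h \<Rightarrow> nat \<Rightarrow> nat \<Rightarrow> real"
  assumes "D \<ge> 0" and bound: "eventually (\<lambda>h. kernel_bound D (d h)) F"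
    and entrywise: "\<And>a b \<eta>. \<eta> > 0 \<Longrightarrow> eventually (\<lambda>h. \<bar>d h a b\<bar> \<le> \<eta>) F"
  shows "((\<lambda>h. coag_l1 (d h) y y) \<longlongrightarrow> 0) F"
proof (rule tendstoI)
  fix e :: real assume "e > 0"
  have "eventually (\<lambda>h. \<forall>p\<in>(UNIV :: unit set). norm (coag_l1 (d h) y y) \<le> e/2) F"
    using coag_l1_uniformly_small[of "\<lambda>_. y" UNIV D "\<lambda>h _. d h" F "e/2"] assms \<open>e > 0\<close> by simp
  then show "eventually (\<lambda>h. dist (coag_l1 (d h) y y) 0 < e) F"
    by eventually_elim (use \<open>e > 0\<close> in auto)
qed

lemma tendsto_coag_l1:
  assumes bound: "eventually (\<lambda>s. kernel_bound C (c s)) F" and c0: "kernel_bound C c0"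
    and entrywise: "\<And>a b. ((\<lambda>s. c s a b) \<longlongrightarrow> c0 a b) F"
    and y: "(y \<longlongrightarrow> y0) F"
  shows "((\<lambda>s. coag_l1 (c s) (y s) (y s)) \<longlongrightarrow> coag_l1 c0 y0 y0) F"
proof -
  have C: "C \<ge> 0" using kernel_bound_nonneg[OF c0] .
  have "((\<lambda>s. coag_l1 (c s) (y s) (y s) - coag_l1 (c s) y0 y0) \<longlongrightarrow> 0) F"
  proof (rule Lim_null_comparison)
    show "eventually (\<lambda>s. norm (coag_l1 (c s) (y s) (y s) - coag_l1 (c s) y0 y0)
        \<le> 3/2 * C * norm (y s - y0) * (norm (y s) + norm y0)) F"
      using bound by eventually_elim (rule norm_coag_l1_diff_square_le)
    have "((\<lambda>s. 3/2 * C * norm (y s - y0) * (norm (y s) + norm y0))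
        \<longlongrightarrow> 3/2 * C * norm (y0 - y0) * (norm y0 + norm y0)) F"
      by (intro tendsto_intros y)
    then show "((\<lambda>s. 3/2 * C * norm (y s - y0) * (norm (y s) + norm y0)) \<longlongrightarrow> 0) F" by simp
  qed
  moreover have "((\<lambda>s. coag_l1 (\<lambda>n j. c s n j - c0 n j) y0 y0) \<longlongrightarrow> 0) F"
  proof (rule coag_l1_tendsto_zero[where D="2 * C"])
    show "eventually (\<lambda>s. kernel_bound (2 * C) (\<lambda>n j. c s n j - c0 n j)) F"
      using bound
    proof eventually_elim
      case (elim s)
      from kernel_bound_lincomb[OF elim c0, of 1 "-1"] show ?case by simp
    qed
    show "eventually (\<lambda>s. \<bar>c s a b - c0 a b\<bar> \<le> \<eta>) F" if "\<eta> > 0" for a b \<eta>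
      using tendstoD[OF entrywise[of a b] that] by eventually_elim (simp add: dist_real_def)
  qed (use C in simp)
  ultimately have "((\<lambda>s. (coag_l1 (c s) (y s) (y s) - coag_l1 (c s) y0 y0)
      + coag_l1 (\<lambda>n j. c s n j - c0 n j) y0 y0) \<longlongrightarrow> 0) F"
    using tendsto_add by fastforce
  moreover have "eventually (\<lambda>s. (coag_l1 (c s) (y s) (y s) - coag_l1 (c s) y0 y0)
      + coag_l1 (\<lambda>n j. c s n j - c0 n j) y0 y0 = coag_l1 (c s) (y s) (y s) - coag_l1 c0 y0 y0) F"
    using bound by eventually_elim (simp add: coag_l1_kernel_diff[OF _ c0])
  ultimately show ?thesis by (simp add: tendsto_cong LIM_zero_iff)
qed

end

section \<open>Differentiability of the mild solution\<close>

locale coagulation_mild_solution = weighted_semigroup + monotone_weight +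
  fixes k kd :: "nat \<Rightarrow> nat \<Rightarrow> real \<Rightarrow> real" and Tend :: ereal
    and u0 g0 :: "nat \<Rightarrow> real" and u :: "real \<Rightarrow> nat \<Rightarrow> real" and tmax :: ereal
  assumes k_cont: "\<And>n j. n \<ge> 1 \<Longrightarrow> j \<ge> 1 \<Longrightarrow> continuous_on {t. 0 \<le> t \<and> ereal t < Tend} (k n j)"
    and k_nonneg: "\<And>n j t. n \<ge> 1 \<Longrightarrow> j \<ge> 1 \<Longrightarrow> 0 \<le> t \<Longrightarrow> ereal t < Tend \<Longrightarrow> k n j t \<ge> 0"
    and CI: "\<And>t'. 0 < t' \<Longrightarrow> ereal t' < Tend \<Longrightarrow> \<exists>c>0. \<forall>n\<ge>1. \<forall>j\<ge>1. \<forall>t\<in>{0..t'}.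
               k n j t \<le> c * w n * w j / w (n + j)"
    and k_deriv: "\<And>n j t. n \<ge> 1 \<Longrightarrow> j \<ge> 1 \<Longrightarrow> 0 \<le> t \<Longrightarrow> ereal t < Tend \<Longrightarrow>
               (k n j has_real_derivative kd n j t) (at t within {s. 0 \<le> s \<and> ereal s < Tend})"
    and kd_cont: "\<And>n j. n \<ge> 1 \<Longrightarrow> j \<ge> 1 \<Longrightarrow> continuous_on {t. 0 \<le> t \<and> ereal t < Tend} (kd n j)"
    and kd_bound: "\<And>t'. 0 < t' \<Longrightarrow> ereal t' < Tend \<Longrightarrow> \<exists>c>0. \<forall>n\<ge>1. \<forall>j\<ge>1. \<forall>t\<in>{0..t'}.
               \<bar>kd n j t\<bar> \<le> c * w n * w j / w (n + j)"
    and tmax_pos: "0 < tmax" and tmax_le: "tmax \<le> Tend"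
    and u_mild: "mild_solution w S k u0 tmax u"
    and u0_gen: "(u0, g0) \<in> P" and u0_lw: "u0 \<in> lw w" and g0_lw: "g0 \<in> lw w"
begin

definition Imax :: "real set" where "Imax = {t. 0 \<le> t \<and> ereal t < tmax}"
definition U :: "real \<Rightarrow> l1" where "U t = to_l1 (u t)"

text \<open>The hypotheses on \<open>k\<close> concern indices \<open>n, j \<ge> 1\<close> only, so \<open>kt s\<close> and \<open>kdt s\<close> replace the
  entries at index 0, which never enter the coagulation term, by 0.\<close>
definition kt :: "real \<Rightarrow> nat \<Rightarrow> nat \<Rightarrow> real" where
  "kt s n j = (if n = 0 \<or> j = 0 then 0 else k n j s)"
definition kdt :: "real \<Rightarrow> nat \<Rightarrow> nat \<Rightarrow> real" where
  "kdt s n j = (if n = 0 \<or> j = 0 then 0 else kd n j s)"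
definition KU :: "real \<Rightarrow> l1" where "KU s = coag_l1 (kt s) (U s) (U s)"

definition U' :: "real \<Rightarrow> l1" where "U' t = Lim (at_right 0) (\<lambda>h. (1/h) *\<^sub>R (U (t + h) - U t))"

lemma Imax_subset: "Imax \<subseteq> {t. 0 \<le> t \<and> ereal t < Tend}"
  using tmax_le by (auto simp: Imax_def)

lemma Imax_interval: "t \<in> Imax \<Longrightarrow> 0 \<le> s \<Longrightarrow> s \<le> t \<Longrightarrow> s \<in> Imax"
  by (auto simp: Imax_def) (meson ereal_less_eq(3) le_less_trans)

lemma Icc_subset_Imax: "t \<in> Imax \<Longrightarrow> {0..t} \<subseteq> Imax"
  using Imax_interval by auto

lemma zero_in_Imax: "0 \<in> Imax" using tmax_pos by (simp add: Imax_def zero_ereal_def)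

lemma Imax_above: "t \<in> Imax \<Longrightarrow> \<exists>t2. t < t2 \<and> t2 \<in> Imax"
proof -
  assume t: "t \<in> Imax"
  then obtain z where "ereal t < ereal z" "ereal z < tmax" using ereal_dense2[of "ereal t" tmax] by (auto simp: Imax_def)
  then show ?thesis using t by (auto simp: Imax_def intro!: exI[of _ z])
qed

lemma mild_solution_parts:
  shows u_in_lw: "t \<in> Imax \<Longrightarrow> u t \<in> lw w"
    and u_cont: "t0 \<in> Imax \<Longrightarrow> lw_tendsto w u (u t0) (at t0 within Imax)"
    and u_eq: "t \<in> Imax \<Longrightarrow> u t n = S t u0 n + integral {0..t} (\<lambda>s. S (t - s) (opK k s (u s)) n)"
  using u_mild unfolding mild_solution_def Imax_def by blast+

lemma continuous_on_U: "continuous_on Imax U"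
  unfolding continuous_on_def
proof
  fix t0 assume t0: "t0 \<in> Imax"
  have ev: "eventually (\<lambda>t. u t \<in> lw w) (at t0 within Imax)"
    by (rule eventually_at_within_of_mem) (rule u_in_lw)
  show "(U \<longlongrightarrow> U t0) (at t0 within Imax)"
    using u_cont[OF t0] lw_tendsto_iff[OF ev u_in_lw[OF t0]] by (simp add: U_def[abs_def])
qed

lemma u_0: "u 0 = u0"
proof
  fix n
  have "u 0 n = S 0 u0 n" using u_eq[OF zero_in_Imax, of n] by simp
  also have "S 0 u0 = u0" using S_0[OF u0_lw] .
  finally show "u 0 n = u0 n" .
qed

lemma U_0: "U 0 = to_l1 u0" by (simp add: U_def u_0)

lemma kernel_bound_kt:
  assumes "t2 \<in> Imax" "t2 > 0"
  shows "\<exists>c>0. \<forall>s\<in>{0..t2}. kernel_bound c (kt s)"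
proof -
  have "ereal t2 < Tend" using assms Imax_subset by auto
  then obtain c where c: "c > 0" "\<forall>n\<ge>1. \<forall>j\<ge>1. \<forall>t\<in>{0..t2}. k n j t \<le> c * w n * w j / w (n + j)"
    using CI[of t2] assms by auto
  have "kernel_bound c (kt s)" if s: "s \<in> {0..t2}" for s
    unfolding kernel_bound_def
  proof (intro allI impI)
    fix n j :: nat assume nj: "1 \<le> n" "1 \<le> j"
    have "s \<in> Imax" using s assms Imax_interval by auto
    then have "k n j s \<ge> 0" using k_nonneg nj Imax_subset by auto
    then show "\<bar>kt s n j\<bar> \<le> c * w n * w j / w (n + j)" using c s nj by (auto simp: kt_def)
  qed
  then show ?thesis using c by blast
qed

lemma kernel_bound_kdt:
  assumes "t2 \<in> Imax" "t2 > 0"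
  shows "\<exists>c>0. \<forall>s\<in>{0..t2}. kernel_bound c (kdt s)"
proof -
  have "ereal t2 < Tend" using assms Imax_subset by auto
  then obtain c where c: "c > 0" "\<forall>n\<ge>1. \<forall>j\<ge>1. \<forall>t\<in>{0..t2}. \<bar>kd n j t\<bar> \<le> c * w n * w j / w (n + j)"
    using kd_bound[of t2] assms by auto
  have "kernel_bound c (kdt s)" if s: "s \<in> {0..t2}" for s
    unfolding kernel_bound_def using c s by (auto simp: kdt_def)
  then show ?thesis using c by blast
qed

lemma kernel_bound_kt_at:
  assumes "s \<in> Imax" shows "\<exists>c>0. kernel_bound c (kt s)"
proof -
  obtain t2 where "s < t2" "t2 \<in> Imax" using Imax_above[OF assms] by blast
  moreover have "s \<ge> 0" using assms by (simp add: Imax_def)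
  ultimately show ?thesis using kernel_bound_kt[of t2] by force
qed

lemma opK_eq_coag_kt: "opK k s f = coag (kt s) f f"
  unfolding opK_eq_coag kt_def[abs_def] by (rule coag_kernel_zero_index[symmetric])

lemma opK_in_lw: "s \<in> Imax \<Longrightarrow> opK k s (u s) \<in> lw w"
  using kernel_bound_kt_at[of s] coag_lw_bound(1) u_in_lw by (auto simp: opK_eq_coag_kt)

lemma KU_eq_to_l1: "s \<in> Imax \<Longrightarrow> KU s = to_l1 (opK k s (u s))"
  by (simp add: KU_def coag_l1_def U_def u_in_lw opK_eq_coag_kt)

lemma continuous_on_KU: "continuous_on Imax KU"
  unfolding continuous_on_def
proof
  fix s0 assume s0: "s0 \<in> Imax"
  obtain t2 where t2: "s0 < t2" "t2 \<in> Imax" using Imax_above[OF s0] by blast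
  have "s0 \<ge> 0" using s0 by (simp add: Imax_def)
  then obtain c where c: "\<And>s. s \<in> {0..t2} \<Longrightarrow> kernel_bound c (kt s)"
    using kernel_bound_kt[OF t2(2)] t2 by fastforce
  let ?L = "at s0 within Imax"
  have "eventually (\<lambda>s. s < t2) ?L"
    using order_tendstoD(2)[OF tendsto_ident_at t2(1)] .
  moreover have "eventually (\<lambda>s. s \<in> Imax) ?L" by (rule eventually_at_within_of_mem)
  ultimately have "eventually (\<lambda>s. kernel_bound c (kt s)) ?L"
    by eventually_elim (use c in \<open>auto simp: Imax_def\<close>)
  moreover have "((\<lambda>s. kt s a b) \<longlongrightarrow> kt s0 a b) ?L" for a b
  proof (cases "a = 0 \<or> b = 0")
    case False
    then have "continuous_on Imax (k a b)" using continuous_on_subset[OF k_cont Imax_subset] by simp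
    then show ?thesis using s0 False unfolding continuous_on_def by (simp add: kt_def)
  qed (auto simp: kt_def)
  moreover have "(U \<longlongrightarrow> U s0) ?L" using continuous_on_U s0 unfolding continuous_on_def by blast
  ultimately show "(KU \<longlongrightarrow> KU s0) ?L"
    unfolding KU_def using c[of s0] t2 \<open>s0 \<ge> 0\<close> by (intro tendsto_coag_l1) auto
qed

lemma continuous_on_KU_Icc: "t \<in> Imax \<Longrightarrow> continuous_on {0..t} KU"
  by (rule continuous_on_subset[OF continuous_on_KU Icc_subset_Imax])

lemma U_mild: assumes t: "t \<in> Imax"
  shows "U t = T t (U 0) + integral {0..t} (\<lambda>s. T (t - s) (KU s))"
proof (rule l1_eqI)
  fix n
  have t0: "t \<ge> 0" using t by (simp add: Imax_def)
  have ic: "continuous_on {0..t} (\<lambda>s. T (t - s) (KU s))" by (rule continuous_on_T_diff[OF continuous_on_KU_Icc[OF t]]) simp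
  have int: "(\<lambda>s. T (t - s) (KU s)) integrable_on {0..t}" by (rule integrable_continuous_interval[OF ic])
  have c1: "l1_nth (T t (U 0)) n = (if n = 0 then 0 else w n * S t u0 n)"
    using t0 by (simp add: U_0 T_to_l1 u0_lw l1_nth_to_l1 S_in_lw)
  have c2: "l1_nth (T (t - s) (KU s)) n = (if n = 0 then 0 else w n * S (t - s) (opK k s (u s)) n)" if s: "s \<in> {0..t}" for s
  proof -
    have sD: "s \<in> Imax" using Imax_interval[OF t] s by auto
    show ?thesis using s by (simp add: KU_eq_to_l1[OF sD] T_to_l1 opK_in_lw[OF sD] l1_nth_to_l1 S_in_lw)
  qed
  have "l1_nth (integral {0..t} (\<lambda>s. T (t - s) (KU s))) n = integral {0..t} (\<lambda>s. l1_nth (T (t - s) (KU s)) n)"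
    by (rule l1_integral_nth[OF int])
  also have "\<dots> = integral {0..t} (\<lambda>s. if n = 0 then 0 else w n * S (t - s) (opK k s (u s)) n)"
    by (rule integral_cong) (rule c2)
  finally have c3: "l1_nth (integral {0..t} (\<lambda>s. T (t - s) (KU s))) n = (if n = 0 then 0 else w n * integral {0..t} (\<lambda>s. S (t - s) (opK k s (u s)) n))"
    using integral_cmul[where c="w n" and f="\<lambda>s. S (t - s) (opK k s (u s)) n" and S="{0..t}"] by simp
  show "l1_nth (U t) n = l1_nth (T t (U 0) + integral {0..t} (\<lambda>s. T (t - s) (KU s))) n"
    using c1 c3 u_eq[OF t, of n] by (simp add: U_def l1_nth_to_l1 u_in_lw[OF t] algebra_simps)
qed

lemma mild_on_U:
  assumes "t \<in> Imax" shows "mild_on t U KU"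
  unfolding mild_on_def
proof (intro conjI ballI)
  show "continuous_on {0..t} KU" by (rule continuous_on_KU_Icc[OF assms])
  fix s assume "s \<in> {0..t}"
  then show "U s = T s (U 0) + integral {0..s} (\<lambda>r. T (s - r) (KU r))"
    by (intro U_mild) (use Imax_interval[OF assms] in auto)
qed

lemma k_mean_value:
  assumes nj: "n \<noteq> 0" "j \<noteq> 0" and s: "0 \<le> s" and h: "0 < h" and sh: "s + h \<in> Imax"
  shows "\<exists>\<xi>\<in>{s<..<s+h}. k n j (s + h) - k n j s = h * kd n j \<xi>"
proof -
  have "\<exists>\<xi>\<in>{s<..<s+h}. k n j (s + h) - k n j s = (\<lambda>y. kd n j \<xi> * y) (s + h - s)"
  proof (rule mvt_simple)
    show "s < s + h" using h by simp
    fix x assume x: "s \<le> x" "x \<le> s + h"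
    then have "x \<in> Imax" using Imax_interval[OF sh] s by auto
    then have "(k n j has_real_derivative kd n j x) (at x within {t. 0 \<le> t \<and> ereal t < Tend})"
      using k_deriv[of n j x] nj Imax_subset by auto
    then have "(k n j has_real_derivative kd n j x) (at x within {s..s+h})"
    proof (rule DERIV_subset)
      show "{s..s+h} \<subseteq> {t. 0 \<le> t \<and> ereal t < Tend}"
      proof
        fix y assume "y \<in> {s..s+h}"
        then have "y \<in> Imax" using Imax_interval[OF sh] s by auto
        then show "y \<in> {t. 0 \<le> t \<and> ereal t < Tend}" using Imax_subset by blast
      qed
    qed
    then show "(k n j has_derivative (\<lambda>y. kd n j x * y)) (at x within {s..s+h})"
      by (simp add: has_field_derivative_def)
  qed
  then show ?thesis by (auto simp: mult.commute)
qed

end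

text \<open>A window \<open>[0, t2] \<subseteq> [0, tmax)\<close> with constants that are uniform on it; difference quotients
  are studied at times \<open>t \<le> t1 < t2\<close> with steps \<open>h \<le> t2 - t1\<close>.\<close>
locale coagulation_window = coagulation_mild_solution +
  fixes t1 t2 c cd M R :: real
  assumes t2_in_Imax: "t2 \<in> Imax" and t1_pos: "0 < t1" and t1_less_t2: "t1 < t2"
    and c_pos: "c > 0" and kt_bound: "\<And>s. s \<in> {0..t2} \<Longrightarrow> kernel_bound c (kt s)"
    and cd_pos: "cd > 0" and kdt_bound: "\<And>s. s \<in> {0..t2} \<Longrightarrow> kernel_bound cd (kdt s)"
    and M_pos: "M > 0" and T_bound: "\<And>t x. t \<in> {0..t2} \<Longrightarrow> norm (T t x) \<le> M * norm x"
    and R_pos: "R > 0" and U_bound: "\<And>s. s \<in> {0..t2} \<Longrightarrow> norm (U s) \<le> R"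
begin

definition dq :: "real \<Rightarrow> real \<Rightarrow> l1" where "dq h t = (1/h) *\<^sub>R (U (t + h) - U t)"

definition dqK :: "real \<Rightarrow> real \<Rightarrow> l1" where "dqK h s = (1/h) *\<^sub>R (KU (s + h) - KU s)"

definition kernel_dq :: "real \<Rightarrow> real \<Rightarrow> nat \<Rightarrow> nat \<Rightarrow> real" where
  "kernel_dq h s n j = (kt (s + h) n j - kt s n j) / h"

definition Gh :: "real \<Rightarrow> real \<Rightarrow> l1" where "Gh h s = coag_l1 (kernel_dq h s) (U (s + h)) (U (s + h))"

definition G0 :: "real \<Rightarrow> l1" where "G0 s = coag_l1 (kdt s) (U s) (U s)"

lemma mild_on_t2: "mild_on t2 U KU"
  by (rule mild_on_U[OF t2_in_Imax])

lemma continuous_on_U_t2: "continuous_on {0..t2} U"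
  by (rule continuous_on_subset[OF continuous_on_U Icc_subset_Imax[OF t2_in_Imax]])

lemma continuous_on_KU_t2: "continuous_on {0..t2} KU"
  by (rule continuous_on_KU_Icc[OF t2_in_Imax])

lemma kernel_dq_mean_value:
  assumes s: "0 \<le> s" and h: "0 < h" and sh: "s + h \<le> t2" and nj: "n \<noteq> 0" "j \<noteq> 0"
  shows "\<exists>\<xi>\<in>{s<..<s+h}. kernel_dq h s n j = kd n j \<xi>"
proof -
  have "s + h \<in> Imax" using Icc_subset_Imax[OF t2_in_Imax] s h sh by auto
  then obtain \<xi> where "\<xi> \<in> {s<..<s+h}" "k n j (s + h) - k n j s = h * kd n j \<xi>"
    using k_mean_value[OF nj s h] by blast
  then show ?thesis using h nj by (auto simp: kernel_dq_def kt_def)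
qed

lemma kernel_bound_kernel_dq:
  assumes s: "0 \<le> s" and h: "0 < h" and sh: "s + h \<le> t2"
  shows "kernel_bound cd (kernel_dq h s)"
  unfolding kernel_bound_def
proof (intro allI impI)
  fix n j :: nat assume nj: "1 \<le> n" "1 \<le> j"
  obtain \<xi> where \<xi>: "\<xi> \<in> {s<..<s+h}" "kernel_dq h s n j = kd n j \<xi>"
    using kernel_dq_mean_value[OF s h sh, of n j] nj by auto
  then have "kernel_bound cd (kdt \<xi>)" using s sh by (intro kdt_bound) auto
  then show "\<bar>kernel_dq h s n j\<bar> \<le> cd * w n * w j / w (n + j)"
    using \<xi> nj unfolding kernel_bound_def by (auto simp: kdt_def)
qed

lemma kt_diff_eq: "h \<noteq> 0 \<Longrightarrow> kt (s + h) n j - kt s n j = h * kernel_dq h s n j"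
  by (simp add: kernel_dq_def)

lemma dqK_decomp:
  assumes s: "0 \<le> s" and h: "0 < h" and sh: "s + h \<le> t2"
  shows "dqK h s = Gh h s + coag_l1 (kt s) (dq h s) (U (s + h)) + coag_l1 (kt s) (U s) (dq h s)"
proof -
  have cs: "kernel_bound c (kt s)" using kt_bound s sh h by auto
  have csh: "kernel_bound c (kt (s + h))" using kt_bound s sh h by auto
  have ce: "kernel_bound cd (kernel_dq h s)" by (rule kernel_bound_kernel_dq[OF s h sh])
  interpret B: bounded_bilinear "coag_l1 (kt s)" by (rule bounded_bilinear_coag_l1[OF cs])
  let ?x = "U (s + h)" and ?y = "U s"
  have "coag_l1 (kt (s + h)) ?x ?x - coag_l1 (kt s) ?x ?x = coag_l1 (\<lambda>n j. kt (s + h) n j - kt s n j) ?x ?x"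
    by (rule coag_l1_kernel_diff[OF csh cs, symmetric])
  also have "\<dots> = coag_l1 (\<lambda>n j. h * kernel_dq h s n j) ?x ?x" using h by (simp add: kt_diff_eq)
  also have "\<dots> = h *\<^sub>R Gh h s" unfolding Gh_def by (rule coag_l1_kernel_scale[OF ce])
  finally have e1: "coag_l1 (kt (s + h)) ?x ?x - coag_l1 (kt s) ?x ?x = h *\<^sub>R Gh h s" .
  have xy: "?x - ?y = h *\<^sub>R dq h s" using h by (simp add: dq_def)
  have e2: "coag_l1 (kt s) ?x ?x - coag_l1 (kt s) ?y ?y = h *\<^sub>R (coag_l1 (kt s) (dq h s) ?x + coag_l1 (kt s) ?y (dq h s))"
    unfolding coag_l1_diff_square[OF cs] xy by (simp add: B.scaleR_left B.scaleR_right scaleR_add_right)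
  have "KU (s + h) - KU s = h *\<^sub>R Gh h s + h *\<^sub>R (coag_l1 (kt s) (dq h s) ?x + coag_l1 (kt s) ?y (dq h s))"
    unfolding KU_def using e1 e2 by (simp add: algebra_simps)
  then show ?thesis using h by (simp add: dqK_def scaleR_add_right)
qed

lemma norm_Gh_le:
  assumes s: "0 \<le> s" and h: "0 < h" and sh: "s + h \<le> t2"
  shows "norm (Gh h s) \<le> 3/2 * cd * R * R"
proof -
  have "norm (Gh h s) \<le> 3/2 * cd * norm (U (s + h)) * norm (U (s + h))"
    unfolding Gh_def by (rule norm_coag_l1_le[OF kernel_bound_kernel_dq[OF s h sh]])
  also have "\<dots> \<le> 3/2 * cd * R * R"
    using U_bound[of "s + h"] s h sh cd_pos R_pos by (intro mult_mono mult_left_mono) auto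
  finally show ?thesis .
qed

lemma norm_dqK_le:
  assumes s: "0 \<le> s" and h: "0 < h" and sh: "s + h \<le> t2"
  shows "norm (dqK h s) \<le> 3/2 * cd * R * R + 3 * c * R * norm (dq h s)"
proof -
  have cs: "kernel_bound c (kt s)" using kt_bound s sh h by auto
  have R1: "norm (U (s + h)) \<le> R" "norm (U s) \<le> R" using U_bound s h sh by auto
  have "norm (dqK h s) \<le> norm (Gh h s) + norm (coag_l1 (kt s) (dq h s) (U (s + h))) + norm (coag_l1 (kt s) (U s) (dq h s))"
    unfolding dqK_decomp[OF s h sh] by (rule norm_triangle_le, rule add_right_mono, rule norm_triangle_ineq)
  also have "norm (coag_l1 (kt s) (dq h s) (U (s + h))) \<le> 3/2 * c * norm (dq h s) * R"
  proof -
    have "3/2 * c * norm (dq h s) * norm (U (s + h)) \<le> 3/2 * c * norm (dq h s) * R"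
      by (rule mult_left_mono) (use R1 c_pos in auto)
    then show ?thesis using norm_coag_l1_le[OF cs, of "dq h s" "U (s + h)"] by linarith
  qed
  also have "norm (coag_l1 (kt s) (U s) (dq h s)) \<le> 3/2 * c * R * norm (dq h s)"
  proof -
    have "3/2 * c * norm (U s) * norm (dq h s) \<le> 3/2 * c * R * norm (dq h s)"
      by (intro mult_right_mono mult_left_mono) (use R1 c_pos in auto)
    then show ?thesis using norm_coag_l1_le[OF cs, of "U s" "dq h s"] by linarith
  qed
  also note norm_Gh_le[OF s h sh]
  finally show ?thesis by (simp add: algebra_simps)
qed

lemma continuous_on_dq:
  assumes "0 < h" "h \<le> t2 - t1"
  shows "continuous_on {0..t1} (dq h)"
  unfolding dq_def[abs_def] using assms t1_less_t2
  by (intro continuous_intros continuous_on_compose2[OF continuous_on_U_t2]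
      continuous_on_subset[OF continuous_on_U_t2]) auto

lemma continuous_on_dqK:
  assumes "0 < h" "h \<le> t2 - t1"
  shows "continuous_on {0..t1} (dqK h)"
  unfolding dqK_def[abs_def] using assms t1_less_t2
  by (intro continuous_intros continuous_on_compose2[OF continuous_on_KU_t2]
      continuous_on_subset[OF continuous_on_KU_t2]) auto

lemma dq_formula:
  assumes t: "t \<in> {0..t1}" and h: "0 < h" "h \<le> t2 - t1"
  shows "dq h t = T t (dq h 0) + integral {0..t} (\<lambda>s. T (t - s) (dqK h s))"
  using mild_on_difference_quotient[OF mild_on_t2, of t h] t h by (simp add: dq_def dqK_def)

lemma norm_duhamel_window_le:
  assumes t: "t \<in> {0..t1}"
    and X: "continuous_on {0..t1} X" and g: "continuous_on {0..t1} g"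
    and Xg: "\<And>s. s \<in> {0..t1} \<Longrightarrow> norm (X s) \<le> g s"
  shows "norm (T t x + integral {0..t} (\<lambda>s. T (t - s) (X s))) \<le> M * norm x + M * integral {0..t} g"
  using t t1_less_t2 M_pos
  by (intro norm_duhamel_le T_bound continuous_on_subset[OF X] continuous_on_subset[OF g] Xg) auto

lemma dq_0_tendsto: "((\<lambda>h. dq h 0) \<longlongrightarrow> to_l1 g0 + KU 0) (at_right 0)"
proof -
  have "((\<lambda>h. (1/h) *\<^sub>R (T h (U 0) - U 0)) \<longlongrightarrow> to_l1 g0) (at_right 0)"
    using generator_iff[OF u0_lw g0_lw] u0_gen by (simp add: U_0)
  from mild_on_quotient_at_0[OF mild_on_t2 _ this] show ?thesis
    using t1_pos t1_less_t2 by (simp add: dq_def)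
qed

lemma norm_dq_le:
  assumes h: "0 < h" "h \<le> t2 - t1" and t: "t \<in> {0..t1}"
  shows "norm (dq h t) \<le> M * (norm (dq h 0) + 3/2 * cd * R * R * t1) * exp (M * (3 * c * R) * t1)"
proof -
  have cont: "continuous_on {0..t1} (\<lambda>t. norm (dq h t))"
    by (intro continuous_intros continuous_on_dq h)
  have "norm (dq h t) \<le> M * norm (dq h 0) + M * integral {0..t} (\<lambda>s. 3/2 * cd * R * R + 3 * c * R * norm (dq h s))"
    if t: "t \<in> {0..t1}" for t
    unfolding dq_formula[OF t h]
  proof (rule norm_duhamel_window_le[OF t continuous_on_dqK[OF h]])
    show "continuous_on {0..t1} (\<lambda>s. 3/2 * cd * R * R + 3 * c * R * norm (dq h s))"
      by (intro continuous_intros cont)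
    show "norm (dqK h s) \<le> 3/2 * cd * R * R + 3 * c * R * norm (dq h s)" if "s \<in> {0..t1}" for s
      using that h by (intro norm_dqK_le) auto
  qed
  then show ?thesis
    using c_pos cd_pos M_pos R_pos by (intro gronwall_affine[OF cont _ _ _ _ _ t]) auto
qed

lemma dq_eventually_bounded: "\<exists>L. eventually (\<lambda>h. \<forall>t\<in>{0..t1}. norm (dq h t) \<le> L) (at_right 0)"
proof -
  let ?V = "to_l1 g0 + KU 0"
  have "eventually (\<lambda>h. dist (dq h 0) ?V < 1) (at_right 0)"
    using tendstoD[OF dq_0_tendsto, of 1] by simp
  moreover have "eventually (\<lambda>h. 0 < h \<and> h < t2 - t1) (at_right 0)"
    using t1_less_t2 by (intro eventually_at_rightI[of 0 "t2 - t1"]) auto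
  ultimately have "eventually (\<lambda>h. \<forall>t\<in>{0..t1}. norm (dq h t)
      \<le> M * (norm ?V + 1 + 3/2 * cd * R * R * t1) * exp (M * (3 * c * R) * t1)) (at_right 0)"
  proof eventually_elim
    case (elim h)
    have "norm (dq h 0) \<le> norm ?V + 1"
      using elim norm_triangle_ineq2[of "dq h 0" ?V] by (simp add: dist_norm)
    then have "M * (norm (dq h 0) + 3/2 * cd * R * R * t1) * exp (M * (3 * c * R) * t1)
        \<le> M * (norm ?V + 1 + 3/2 * cd * R * R * t1) * exp (M * (3 * c * R) * t1)"
      using M_pos by (intro mult_right_mono mult_left_mono) auto
    then show ?case using norm_dq_le elim by fastforce
  qed
  then show ?thesis by blast
qed

lemma U_uniformly_continuous:
  assumes "\<eta> > 0"
  shows "\<exists>d>0. \<forall>a\<in>{0..t2}. \<forall>b\<in>{0..t2}. \<bar>a - b\<bar> < d \<longrightarrow> norm (U a - U b) < \<eta>"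
  using compact_uniformly_continuous[OF continuous_on_U_t2] assms
  unfolding uniformly_continuous_on_def by (fastforce simp: dist_norm dist_real_def)

lemma kernel_dq_tendsto_kdt:
  assumes "\<eta> > 0"
  shows "eventually (\<lambda>h. \<forall>s\<in>{0..t1}. \<bar>kernel_dq h s a b - kdt s a b\<bar> \<le> \<eta>) (at_right 0)"
proof (cases "a = 0 \<or> b = 0")
  case True
  then show ?thesis using assms by (auto simp: kernel_dq_def kt_def kdt_def)
next
  case False
  have "continuous_on {0..t2} (kd a b)"
    by (rule continuous_on_subset[OF kd_cont]) (use False Icc_subset_Imax[OF t2_in_Imax] Imax_subset in auto)
  then obtain d where d: "d > 0" "\<forall>x\<in>{0..t2}. \<forall>y\<in>{0..t2}. \<bar>x - y\<bar> < d \<longrightarrow> \<bar>kd a b x - kd a b y\<bar> < \<eta>"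
    using compact_uniformly_continuous assms unfolding uniformly_continuous_on_def
    by (metis compact_Icc dist_real_def)
  have "\<bar>kernel_dq h s a b - kdt s a b\<bar> \<le> \<eta>" if h: "0 < h" "h < min d (t2 - t1)" and s: "s \<in> {0..t1}" for h s
  proof -
    obtain \<xi> where "\<xi> \<in> {s<..<s+h}" "kernel_dq h s a b = kd a b \<xi>"
      using kernel_dq_mean_value[of s h a b] s h False by auto
    moreover have "\<bar>kd a b \<xi> - kd a b s\<bar> < \<eta>" using d(2) calculation(1) s h by auto
    ultimately show ?thesis using False by (simp add: kdt_def)
  qed
  then show ?thesis
    using d t1_less_t2 by (intro eventually_at_rightI[of 0 "min d (t2 - t1)"]) auto
qed

lemma coag_l1_kernel_dq_kdt_small:
  assumes "e > 0"
  shows "eventually (\<lambda>h. \<forall>s\<in>{0..t1}.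
    norm (coag_l1 (\<lambda>n j. kernel_dq h s n j - kdt s n j) (U s) (U s)) \<le> e) (at_right 0)"
proof (rule coag_l1_uniformly_small[where D="2 * cd"])
  show "compact (U ` {0..t1})"
    using t1_less_t2 by (intro compact_continuous_image continuous_on_subset[OF continuous_on_U_t2]) auto
  have "eventually (\<lambda>h. 0 < h \<and> h < t2 - t1) (at_right 0)"
    using t1_less_t2 by (intro eventually_at_rightI[of 0 "t2 - t1"]) auto
  then show "eventually (\<lambda>h. \<forall>s\<in>{0..t1}. kernel_bound (2 * cd) (\<lambda>n j. kernel_dq h s n j - kdt s n j)) (at_right 0)"
  proof eventually_elim
    case (elim h)
    show ?case
    proof
      fix s assume "s \<in> {0..t1}"
      then have "kernel_bound cd (kernel_dq h s)" "kernel_bound cd (kdt s)"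
        using elim t1_less_t2 by (auto intro: kernel_bound_kernel_dq kdt_bound)
      from kernel_bound_lincomb[OF this, of 1 "-1"]
      show "kernel_bound (2 * cd) (\<lambda>n j. kernel_dq h s n j - kdt s n j)" by simp
    qed
  qed
qed (use cd_pos assms kernel_dq_tendsto_kdt in auto)

lemma Gh_tendsto_G0_uniformly:
  assumes e: "e > 0"
  shows "eventually (\<lambda>h. \<forall>s\<in>{0..t1}. norm (Gh h s - G0 s) \<le> e) (at_right 0)"
proof -
  define \<eta> where "\<eta> = e / (6 * cd * R)"
  have \<eta>: "\<eta> > 0" "3/2 * cd * \<eta> * (R + R) = e/2"
    using e cd_pos R_pos by (auto simp: \<eta>_def field_simps)
  obtain du where du: "du > 0" "\<forall>a\<in>{0..t2}. \<forall>b\<in>{0..t2}. \<bar>a - b\<bar> < du \<longrightarrow> norm (U a - U b) < \<eta>"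
    using U_uniformly_continuous[OF \<eta>(1)] by blast
  have "eventually (\<lambda>h. 0 < h \<and> h < min du (t2 - t1)) (at_right 0)"
    using du t1_less_t2 by (intro eventually_at_rightI[of 0 "min du (t2 - t1)"]) auto
  moreover have "eventually (\<lambda>h. \<forall>s\<in>{0..t1}.
      norm (coag_l1 (\<lambda>n j. kernel_dq h s n j - kdt s n j) (U s) (U s)) \<le> e/2) (at_right 0)"
    by (rule coag_l1_kernel_dq_kdt_small) (use e in simp)
  ultimately show ?thesis
  proof eventually_elim
    case (elim h)
    show ?case
    proof
      fix s assume s: "s \<in> {0..t1}"
      have bounds: "kernel_bound cd (kernel_dq h s)" "kernel_bound cd (kdt s)"
        using elim s t1_less_t2 by (auto intro: kernel_bound_kernel_dq kdt_bound)
      have "norm (coag_l1 (kernel_dq h s) (U (s + h)) (U (s + h)) - coag_l1 (kernel_dq h s) (U s) (U s))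
          \<le> 3/2 * cd * norm (U (s + h) - U s) * (norm (U (s + h)) + norm (U s))"
        by (rule norm_coag_l1_diff_square_le[OF bounds(1)])
      also have "\<dots> \<le> 3/2 * cd * \<eta> * (R + R)"
        using du(2) U_bound elim s t1_less_t2 cd_pos \<eta>(1)
        by (intro mult_mono mult_left_mono add_mono) (auto intro: less_imp_le)
      finally have "norm (coag_l1 (kernel_dq h s) (U (s + h)) (U (s + h)) - coag_l1 (kernel_dq h s) (U s) (U s))
          \<le> e/2" using \<eta>(2) by simp
      moreover have eq: "Gh h s - G0 s = (coag_l1 (kernel_dq h s) (U (s + h)) (U (s + h))
          - coag_l1 (kernel_dq h s) (U s) (U s)) + coag_l1 (\<lambda>n j. kernel_dq h s n j - kdt s n j) (U s) (U s)"
        by (simp add: Gh_def G0_def coag_l1_kernel_diff[OF bounds])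
      moreover have "norm (coag_l1 (\<lambda>n j. kernel_dq h s n j - kdt s n j) (U s) (U s)) \<le> e/2"
        using elim s by blast
      ultimately show "norm (Gh h s - G0 s) \<le> e"
        unfolding eq using norm_triangle_ineq[of "coag_l1 (kernel_dq h s) (U (s + h)) (U (s + h))
          - coag_l1 (kernel_dq h s) (U s) (U s)" "coag_l1 (\<lambda>n j. kernel_dq h s n j - kdt s n j) (U s) (U s)"]
        by linarith
    qed
  qed
qed

lemma dq_diff_formula:
  assumes t: "t \<in> {0..t1}" and h: "0 < h" "h \<le> t2 - t1" and h': "0 < h'" "h' \<le> t2 - t1"
  shows "dq h t - dq h' t = T t (dq h 0 - dq h' 0) + integral {0..t} (\<lambda>s. T (t - s) (dqK h s - dqK h' s))"
proof -
  have "continuous_on {0..t} (dqK g)" if "0 < g" "g \<le> t2 - t1" for g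
    using t by (intro continuous_on_subset[OF continuous_on_dqK[OF that]]) auto
  then have int: "(\<lambda>s. T (t - s) (dqK g s)) integrable_on {0..t}" if "0 < g" "g \<le> t2 - t1" for g
    using that by (intro integrable_T_diff) auto
  have "integral {0..t} (\<lambda>s. T (t - s) (dqK h s - dqK h' s))
      = integral {0..t} (\<lambda>s. T (t - s) (dqK h s) - T (t - s) (dqK h' s))"
    by (rule integral_cong) (simp add: T_linear_simps)
  also have "\<dots> = integral {0..t} (\<lambda>s. T (t - s) (dqK h s)) - integral {0..t} (\<lambda>s. T (t - s) (dqK h' s))"
    by (rule integral_diff[OF int[OF h] int[OF h']])
  finally show ?thesis
    using dq_formula[OF t h] dq_formula[OF t h'] t by (simp add: T_linear_simps algebra_simps)
qed

lemma norm_dqK_diff_le: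
  assumes s: "s \<in> {0..t1}" and h: "0 < h" "h \<le> t2 - t1" and h': "0 < h'" "h' \<le> t2 - t1"
    and G: "norm (Gh h s - Gh h' s) \<le> \<eta>" and L: "norm (dq h' s) \<le> L"
    and U: "norm (U (s + h) - U (s + h')) \<le> \<eta>"
  shows "norm (dqK h s - dqK h' s) \<le> (\<eta> + 3/2 * c * L * \<eta>) + 3 * c * R * norm (dq h s - dq h' s)"
proof -
  have s0: "0 \<le> s" "s + h \<le> t2" "s + h' \<le> t2" using s h h' by auto
  have cs: "kernel_bound c (kt s)" using kt_bound s t1_less_t2 by auto
  interpret B: bounded_bilinear "coag_l1 (kt s)" by (rule bounded_bilinear_coag_l1[OF cs])
  let ?a = "dq h s" and ?b = "dq h' s" and ?x = "U (s + h)" and ?x' = "U (s + h')"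
  have "dqK h s - dqK h' s = (Gh h s - Gh h' s) + coag_l1 (kt s) (?a - ?b) ?x
      + coag_l1 (kt s) ?b (?x - ?x') + coag_l1 (kt s) (U s) (?a - ?b)"
    unfolding dqK_decomp[OF s0(1) h(1) s0(2)] dqK_decomp[OF s0(1) h'(1) s0(3)]
    by (simp add: B.diff_left B.diff_right algebra_simps)
  then have "norm (dqK h s - dqK h' s) \<le> norm (Gh h s - Gh h' s) + norm (coag_l1 (kt s) (?a - ?b) ?x)
      + norm (coag_l1 (kt s) ?b (?x - ?x')) + norm (coag_l1 (kt s) (U s) (?a - ?b))"
    by (simp only:) (intro norm_triangle_le add_right_mono norm_triangle_ineq order_refl)
  also have "norm (coag_l1 (kt s) (?a - ?b) ?x) \<le> 3/2 * c * norm (?a - ?b) * R"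
  proof -
    have "3/2 * c * norm (?a - ?b) * norm ?x \<le> 3/2 * c * norm (?a - ?b) * R"
      using U_bound[of "s + h"] s0 h c_pos by (intro mult_left_mono) auto
    then show ?thesis using norm_coag_l1_le[OF cs, of "?a - ?b" ?x] by linarith
  qed
  also have "norm (coag_l1 (kt s) ?b (?x - ?x')) \<le> 3/2 * c * L * \<eta>"
  proof -
    have "3/2 * c * norm ?b * norm (?x - ?x') \<le> 3/2 * c * L * \<eta>"
      using L U c_pos order_trans[OF norm_ge_zero L] by (intro mult_mono mult_left_mono) auto
    then show ?thesis using norm_coag_l1_le[OF cs, of ?b "?x - ?x'"] by linarith
  qed
  also have "norm (coag_l1 (kt s) (U s) (?a - ?b)) \<le> 3/2 * c * R * norm (?a - ?b)"
  proof -
    have "3/2 * c * norm (U s) * norm (?a - ?b) \<le> 3/2 * c * R * norm (?a - ?b)"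
      using U_bound[of s] s0 h c_pos by (intro mult_right_mono mult_left_mono) auto
    then show ?thesis using norm_coag_l1_le[OF cs, of "U s" "?a - ?b"] by linarith
  qed
  finally show ?thesis using G by (simp add: algebra_simps)
qed

lemma norm_dq_diff_le:
  assumes h: "0 < h" "h \<le> t2 - t1" and h': "0 < h'" "h' \<le> t2 - t1" and "\<eta> \<ge> 0" "L \<ge> 0"
    and at_0: "norm (dq h 0 - dq h' 0) \<le> \<eta>"
    and along: "\<And>s. s \<in> {0..t1} \<Longrightarrow>
      norm (Gh h s - Gh h' s) \<le> \<eta> \<and> norm (dq h' s) \<le> L \<and> norm (U (s + h) - U (s + h')) \<le> \<eta>"
    and t: "t \<in> {0..t1}"
  shows "norm (dq h t - dq h' t) \<le> M * (\<eta> + (\<eta> + 3/2 * c * L * \<eta>) * t1) * exp (M * (3 * c * R) * t1)"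
proof -
  have cont: "continuous_on {0..t1} (\<lambda>t. norm (dq h t - dq h' t))"
    by (intro continuous_intros continuous_on_dq h h')
  have "norm (dq h t - dq h' t) \<le> M * \<eta>
      + M * integral {0..t} (\<lambda>s. (\<eta> + 3/2 * c * L * \<eta>) + 3 * c * R * norm (dq h s - dq h' s))"
    if t: "t \<in> {0..t1}" for t
  proof -
    have "norm (dq h t - dq h' t) \<le> M * norm (dq h 0 - dq h' 0)
        + M * integral {0..t} (\<lambda>s. (\<eta> + 3/2 * c * L * \<eta>) + 3 * c * R * norm (dq h s - dq h' s))"
      unfolding dq_diff_formula[OF t h h']
    proof (rule norm_duhamel_window_le[OF t])
      show "continuous_on {0..t1} (\<lambda>s. dqK h s - dqK h' s)"
        by (intro continuous_intros continuous_on_dqK h h')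
      show "continuous_on {0..t1} (\<lambda>s. (\<eta> + 3/2 * c * L * \<eta>) + 3 * c * R * norm (dq h s - dq h' s))"
        by (intro continuous_intros cont)
      show "norm (dqK h s - dqK h' s) \<le> (\<eta> + 3/2 * c * L * \<eta>) + 3 * c * R * norm (dq h s - dq h' s)"
        if "s \<in> {0..t1}" for s
        using along[OF that] by (intro norm_dqK_diff_le[OF that h h']) auto
    qed
    moreover have "M * norm (dq h 0 - dq h' 0) \<le> M * \<eta>" using at_0 M_pos by simp
    ultimately show ?thesis by linarith
  qed
  then show ?thesis
    using assms c_pos M_pos R_pos by (intro gronwall_affine[OF cont _ _ _ _ _ t]) auto
qed

lemma dq_uniformly_Cauchy:
  assumes e: "e > 0"
  shows "\<exists>P. eventually P (at_right 0) \<and> (\<forall>h h'. P h \<and> P h' \<longrightarrow> (\<forall>t\<in>{0..t1}. dist (dq h t) (dq h' t) \<le> e))"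
proof -
  obtain L where L: "eventually (\<lambda>h. \<forall>t\<in>{0..t1}. norm (dq h t) \<le> L) (at_right 0)"
    using dq_eventually_bounded by blast
  define L' where "L' = max L 0"
  define C where "C = M * (1 + (1 + 3/2 * c * L') * t1) * exp (M * (3 * c * R) * t1)"
  define \<eta> where "\<eta> = e / C"
  have C: "C > 0" using M_pos c_pos t1_pos by (simp add: C_def L'_def add_pos_nonneg)
  then have \<eta>: "\<eta> > 0" using e by (simp add: \<eta>_def)
  have "M * (\<eta> + (\<eta> + 3/2 * c * L' * \<eta>) * t1) * exp (M * (3 * c * R) * t1) = \<eta> * C"
    by (simp add: C_def algebra_simps)
  also have "\<dots> = e" using C by (simp add: \<eta>_def)
  finally have C\<eta>: "M * (\<eta> + (\<eta> + 3/2 * c * L' * \<eta>) * t1) * exp (M * (3 * c * R) * t1) = e" .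
  obtain du where du: "du > 0" "\<forall>a\<in>{0..t2}. \<forall>b\<in>{0..t2}. \<bar>a - b\<bar> < du \<longrightarrow> norm (U a - U b) < \<eta>"
    using U_uniformly_continuous[OF \<eta>] by blast
  define P where "P h \<longleftrightarrow> 0 < h \<and> h < min du (t2 - t1) \<and> dist (dq h 0) (to_l1 g0 + KU 0) < \<eta>/2 \<and>
      (\<forall>s\<in>{0..t1}. norm (Gh h s - G0 s) \<le> \<eta>/2) \<and> (\<forall>t\<in>{0..t1}. norm (dq h t) \<le> L)" for h
  have "eventually (\<lambda>h. 0 < h \<and> h < min du (t2 - t1)) (at_right 0)"
    using du t1_less_t2 by (intro eventually_at_rightI[of 0 "min du (t2 - t1)"]) auto
  moreover have "eventually (\<lambda>h. dist (dq h 0) (to_l1 g0 + KU 0) < \<eta>/2) (at_right 0)"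
    using tendstoD[OF dq_0_tendsto, of "\<eta>/2"] \<eta> by simp
  moreover have "eventually (\<lambda>h. \<forall>s\<in>{0..t1}. norm (Gh h s - G0 s) \<le> \<eta>/2) (at_right 0)"
    by (rule Gh_tendsto_G0_uniformly) (use \<eta> in simp)
  ultimately have "eventually P (at_right 0)"
    using L unfolding P_def by eventually_elim (elim conjE; intro conjI; assumption)
  moreover have "dist (dq h t) (dq h' t) \<le> e" if P: "P h" "P h'" and t: "t \<in> {0..t1}" for h h' t
  proof -
    have h: "0 < h" "h < du" "h < t2 - t1" "dist (dq h 0) (to_l1 g0 + KU 0) < \<eta>/2"
      "\<forall>s\<in>{0..t1}. norm (Gh h s - G0 s) \<le> \<eta>/2"
      and h': "0 < h'" "h' < du" "h' < t2 - t1" "dist (dq h' 0) (to_l1 g0 + KU 0) < \<eta>/2"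
      "\<forall>s\<in>{0..t1}. norm (Gh h' s - G0 s) \<le> \<eta>/2" "\<forall>t\<in>{0..t1}. norm (dq h' t) \<le> L"
      using P unfolding P_def by simp_all
    have "norm (dq h t - dq h' t) \<le> M * (\<eta> + (\<eta> + 3/2 * c * L' * \<eta>) * t1) * exp (M * (3 * c * R) * t1)"
    proof (rule norm_dq_diff_le[OF _ _ _ _ _ _ _ _ t])
      have "dist (dq h 0) (dq h' 0) < \<eta>" using h(4) h'(4) by (rule dist_triangle_half_l)
      then show "norm (dq h 0 - dq h' 0) \<le> \<eta>" by (simp add: dist_norm)
      fix s assume s: "s \<in> {0..t1}"
      have "norm (Gh h s - Gh h' s) \<le> norm (Gh h s - G0 s) + norm (Gh h' s - G0 s)"
        using norm_triangle_ineq4[of "Gh h s - G0 s" "Gh h' s - G0 s"] by simp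
      then have "norm (Gh h s - Gh h' s) \<le> \<eta>" using h(5) h'(5) s by fastforce
      moreover have "norm (dq h' s) \<le> L'" using h'(6) s unfolding L'_def by fastforce
      moreover have "norm (U (s + h) - U (s + h')) < \<eta>"
        using du(2) s h h' by (simp add: abs_minus_commute)
      ultimately show "norm (Gh h s - Gh h' s) \<le> \<eta> \<and> norm (dq h' s) \<le> L' \<and> norm (U (s + h) - U (s + h')) \<le> \<eta>"
        by simp
    qed (use h h' \<eta> in \<open>simp_all add: L'_def\<close>)
    then show ?thesis unfolding C\<eta> by (simp add: dist_norm)
  qed
  ultimately show ?thesis by blast
qed

lemma uniform_limit_dq: "uniform_limit {0..t1} dq U' (at_right 0)"
proof -
  have "U' = (\<lambda>t. Lim (at_right 0) (\<lambda>h. dq h t))" by (simp add: U'_def dq_def fun_eq_iff)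
  moreover have "at_right (0::real) \<noteq> bot"
    using trivial_limit_at_right_real unfolding trivial_limit_def by blast
  ultimately show ?thesis using uniform_limit_of_uniformly_Cauchy[OF _ dq_uniformly_Cauchy] by simp
qed

lemma continuous_on_U': "continuous_on {0..t1} U'"
proof (rule uniform_limit_theorem[OF _ uniform_limit_dq])
  show "eventually (\<lambda>h. continuous_on {0..t1} (dq h)) (at_right 0)"
    using t1_less_t2 by (intro eventually_at_rightI[of 0 "t2 - t1"] continuous_on_dq) auto
qed simp

lemma U_difference_quotient_tendsto:
  "t \<in> {0<..<t1} \<Longrightarrow> ((\<lambda>h. (1/h) *\<^sub>R (U (t + h) - U t)) \<longlongrightarrow> U' t) (at 0)"
  using uniform_limit_dq continuous_on_U'
  by (intro difference_quotient_two_sided[where a=0 and b=t1]) (auto simp: dq_def[abs_def])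

lemma U_generator_tendsto:
  "t \<in> {0..t1} \<Longrightarrow> ((\<lambda>h. (1/h) *\<^sub>R (T h (U t) - U t)) \<longlongrightarrow> U' t - KU t) (at_right 0)"
  using tendsto_uniform_limitI[OF uniform_limit_dq] t1_less_t2
  by (intro mild_on_generator[OF mild_on_t2]) (auto simp: dq_def)

end

context coagulation_mild_solution
begin

lemma exists_window:
  assumes t: "t \<in> Imax" "t > 0"
  obtains t1 t2 c cd M R where "coagulation_window w S P k kd Tend u0 g0 u tmax t1 t2 c cd M R" "t < t1"
proof -
  obtain t1 where t1: "t < t1" "t1 \<in> Imax" using Imax_above[OF t(1)] by blast
  obtain t2 where t2: "t1 < t2" "t2 \<in> Imax" using Imax_above[OF t1(2)] by blast
  have "t2 > 0" using t t1 t2 by auto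
  obtain c where "c > 0" "\<forall>s\<in>{0..t2}. kernel_bound c (kt s)"
    using kernel_bound_kt[OF t2(2) \<open>t2 > 0\<close>] by blast
  moreover obtain cd where "cd > 0" "\<forall>s\<in>{0..t2}. kernel_bound cd (kdt s)"
    using kernel_bound_kdt[OF t2(2) \<open>t2 > 0\<close>] by blast
  moreover obtain M where "M > 0" "\<forall>t\<in>{0..t2}. \<forall>x. norm (T t x) \<le> M * norm x"
    using T_uniform_bound[of t2] \<open>t2 > 0\<close> by auto
  moreover obtain R where "R > 0" "\<forall>s\<in>{0..t2}. norm (U s) \<le> R"
  proof -
    have "compact (U ` {0..t2})"
      by (intro compact_continuous_image continuous_on_subset[OF continuous_on_U Icc_subset_Imax[OF t2(2)]]) auto
    then show ?thesis using that by (auto simp: bounded_pos dest!: compact_imp_bounded)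
  qed
  ultimately have "coagulation_window w S P k kd Tend u0 g0 u tmax t1 t2 c cd M R"
    by unfold_locales (use t t1 t2 in auto)
  then show ?thesis using that t1 by blast
qed

lemma U'_properties:
  assumes t: "t \<in> Imax" "t > 0"
  shows U_difference_quotient: "((\<lambda>h. (1/h) *\<^sub>R (U (t + h) - U t)) \<longlongrightarrow> U' t) (at 0)"
    and isCont_U': "isCont U' t"
    and U_generator: "((\<lambda>h. (1/h) *\<^sub>R (T h (U t) - U t)) \<longlongrightarrow> U' t - KU t) (at_right 0)"
proof -
  obtain t1 t2 c cd M R where W: "coagulation_window w S P k kd Tend u0 g0 u tmax t1 t2 c cd M R"
    and "t < t1"
    using exists_window[OF t] by blast
  interpret W: coagulation_window w S P k kd Tend u0 g0 u tmax t1 t2 c cd M R by (rule W)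
  show "((\<lambda>h. (1/h) *\<^sub>R (U (t + h) - U t)) \<longlongrightarrow> U' t) (at 0)"
    using \<open>t < t1\<close> t by (intro W.U_difference_quotient_tendsto) auto
  show "isCont U' t"
    using \<open>t < t1\<close> t by (intro continuous_on_interior[OF W.continuous_on_U']) auto
  show "((\<lambda>h. (1/h) *\<^sub>R (T h (U t) - U t)) \<longlongrightarrow> U' t - KU t) (at_right 0)"
    using \<open>t < t1\<close> t by (intro W.U_generator_tendsto) auto
qed

lemma classical_solution:
  assumes P: "P = graphG w a b"
  shows "classical_solution w a b k u0 tmax u"
  unfolding classical_solution_def domG_def P[symmetric]
proof (intro conjI allI impI exI[of _ "\<lambda>t. of_l1 (U' t)"])
  fix t assume "0 < t \<and> ereal t < tmax"
  then have t: "t \<in> Imax" "t > 0" by (auto simp: Imax_def)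
  have near_t: "eventually (\<lambda>h. t + h \<in> Imax) (at 0)"
  proof -
    obtain t2 where "t < t2" "t2 \<in> Imax" using Imax_above[OF t(1)] by blast
    then have "eventually (\<lambda>h. h \<in> {-t<..<t2 - t}) (at (0::real))"
      using t by (intro eventually_at_in_open') auto
    then show ?thesis by eventually_elim (use \<open>t2 \<in> Imax\<close> Imax_interval in auto)
  qed
  show "of_l1 (U' t) \<in> lw w" by simp
  have "eventually (\<lambda>h. (1/h) *\<^sub>R (U (t + h) - U t) = to_l1 (\<lambda>n. (u (t + h) n - u t n) / h)) (at 0)"
    using near_t by eventually_elim (simp add: U_def to_l1_diff_quotient u_in_lw t)
  moreover have "eventually (\<lambda>h. (\<lambda>n. (u (t + h) n - u t n) / h) \<in> lw w) (at 0)"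
    using near_t by eventually_elim (simp add: lw_diff_quotient u_in_lw t)
  ultimately show "lw_tendsto w (\<lambda>h n. (u (t + h) n - u t n) / h) (of_l1 (U' t)) (at 0)"
    using U_difference_quotient[OF t] by (simp add: lw_tendsto_iff tendsto_cong)
  have "((\<lambda>s. to_l1 (of_l1 (U' s))) \<longlongrightarrow> to_l1 (of_l1 (U' t))) (at t within {s. 0 < s \<and> ereal s < tmax})"
    using continuous_at_imp_continuous_at_within[OF isCont_U'[OF t]] by (simp add: continuous_within)
  then show "lw_tendsto w (\<lambda>s. of_l1 (U' s)) (of_l1 (U' t)) (at t within {s. 0 < s \<and> ereal s < tmax})"
    by (simp add: lw_tendsto_iff)
  have "(\<lambda>n. of_l1 (U' t) n - opK k t (u t) n) \<in> lw w"
    using opK_in_lw t by (intro lw_diff) auto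
  moreover have "to_l1 (\<lambda>n. of_l1 (U' t) n - opK k t (u t) n) = U' t - KU t"
    using t by (simp add: to_l1_diff opK_in_lw KU_eq_to_l1)
  ultimately show "(u t, \<lambda>n. of_l1 (U' t) n - opK k t (u t) n) \<in> P"
    using U_generator[OF t] generator_iff[OF u_in_lw[OF t(1)]] by (simp add: U_def)
  then show "u t \<in> {f. \<exists>g. (f, g) \<in> P}" by blast
next
  fix t assume "0 \<le> t \<and> ereal t < tmax"
  then show "u t \<in> lw w" using u_in_lw by (simp add: Imax_def)
next
  fix t0 assume "0 \<le> t0 \<and> ereal t0 < tmax"
  then show "lw_tendsto w u (u t0) (at t0 within {t. 0 \<le> t \<and> ereal t < tmax})"
    using u_cont by (simp add: Imax_def)
qed (rule u_0)

end

theorem theorem4p14: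
  fixes T :: ereal and a w :: "nat \<Rightarrow> real" and b :: "nat \<Rightarrow> nat \<Rightarrow> real"
    and k kd :: "nat \<Rightarrow> nat \<Rightarrow> real \<Rightarrow> real" and \<kappa> :: real
    and S :: "real \<Rightarrow> (nat \<Rightarrow> real) \<Rightarrow> nat \<Rightarrow> real"
    and u0 :: "nat \<Rightarrow> real" and u :: "real \<Rightarrow> nat \<Rightarrow> real" and tmax :: ereal
  assumes T_pos: "0 < T"
    and a_nonneg: "\<And>n. n \<ge> 1 \<Longrightarrow> a n \<ge> 0"
    and b_nonneg: "\<And>n j. n \<ge> 1 \<Longrightarrow> j \<ge> 1 \<Longrightarrow> b n j \<ge> 0"
    and b_zero: "\<And>n j. n \<ge> 1 \<Longrightarrow> j \<ge> 1 \<Longrightarrow> j \<le> n \<Longrightarrow> b n j = 0"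
    and k_cont: "\<And>n j. n \<ge> 1 \<Longrightarrow> j \<ge> 1 \<Longrightarrow> continuous_on {t. 0 \<le> t \<and> ereal t < T} (k n j)"
    and k_nonneg: "\<And>n j t. n \<ge> 1 \<Longrightarrow> j \<ge> 1 \<Longrightarrow> 0 \<le> t \<Longrightarrow> ereal t < T \<Longrightarrow> k n j t \<ge> 0"
    and k_sym: "\<And>n j t. n \<ge> 1 \<Longrightarrow> j \<ge> 1 \<Longrightarrow> 0 \<le> t \<Longrightarrow> ereal t < T \<Longrightarrow> k n j t = k j n t"
    and w_ge: "\<And>n. n \<ge> 1 \<Longrightarrow> w n \<ge> real n"
    and w_mono: "\<And>n m. 1 \<le> n \<Longrightarrow> n \<le> m \<Longrightarrow> w n \<le> w m"
    and kappa: "0 < \<kappa>" "\<kappa> \<le> 1"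
    and w_b: "\<And>j. j \<ge> 2 \<Longrightarrow> (\<Sum>n\<in>{1..<j}. w n * b n j) \<le> \<kappa> * w j"
    and CI: "\<And>t'. 0 < t' \<Longrightarrow> ereal t' < T \<Longrightarrow> \<exists>c>0. \<forall>n\<ge>1. \<forall>j\<ge>1. \<forall>t\<in>{0..t'}.
               k n j t \<le> c * w n * w j / w (n + j)"
    and k_deriv: "\<And>n j t. n \<ge> 1 \<Longrightarrow> j \<ge> 1 \<Longrightarrow> 0 \<le> t \<Longrightarrow> ereal t < T \<Longrightarrow>
               (k n j has_real_derivative kd n j t) (at t within {s. 0 \<le> s \<and> ereal s < T})"
    and kd_cont: "\<And>n j. n \<ge> 1 \<Longrightarrow> j \<ge> 1 \<Longrightarrow> continuous_on {t. 0 \<le> t \<and> ereal t < T} (kd n j)"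
    and kd_bound: "\<And>t'. 0 < t' \<Longrightarrow> ereal t' < T \<Longrightarrow> \<exists>c>0. \<forall>n\<ge>1. \<forall>j\<ge>1. \<forall>t\<in>{0..t'}.
               \<bar>kd n j t\<bar> \<le> c * w n * w j / w (n + j)"
    and S_gen: "C0_semigroup_gen w S (graphG w a b)"
    and u0_dom: "u0 \<in> domG w a b"
    and u0_nonneg: "\<And>n. u0 n \<ge> 0"
    and tmax_pos: "0 < tmax" and tmax_le: "tmax \<le> T"
    and u_mild: "mild_solution w S k u0 tmax u"
    and u_maximal: "\<And>t1 v. t1 \<le> T \<Longrightarrow> mild_solution w S k u0 t1 v \<Longrightarrow> t1 \<le> tmax"
  shows "classical_solution w a b k u0 tmax u"
proof -
  have "weight w"
  proof
    fix n :: nat assume "n \<ge> 1"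
    then have "real n \<ge> 1" by simp
    then show "w n \<ge> 1" using w_ge[OF \<open>n \<ge> 1\<close>] by linarith
  qed
  obtain g0 where g0: "(u0, g0) \<in> graphG w a b" using u0_dom by (auto simp: domG_def)
  interpret M: coagulation_mild_solution w S "graphG w a b" k kd T u0 g0 u tmax
  proof (intro coagulation_mild_solution.intro weighted_semigroup.intro monotone_weight.intro)
    show "weighted_semigroup_axioms w S (graphG w a b)" by unfold_locales (rule S_gen)
    show "monotone_weight_axioms w" by unfold_locales (rule w_mono)
    show "coagulation_mild_solution_axioms w S (graphG w a b) k kd T u0 g0 u tmax"
      using g0 by unfold_locales (use k_cont k_nonneg CI k_deriv kd_cont kd_bound tmax_pos tmax_le u_mild
          in \<open>auto simp: graphG_def\<close>)
  qed fact+
  show ?thesis by (rule M.classical_solution) (rule refl)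
qed

end
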